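(* Let $\multimap_{\mathtt m}$, $\multimap_{\mathtt e}$ and $\equiv$ be the reduction relations and the structural equivalence of any one of the four calculi ${\tt Name}$, ${\tt Value}^{\tt LR}$, ${\tt Value}^{\tt RL}$, ${\tt Need}$ described below, and let $\mathtt x\in\{\mathtt m,\mathtt e\}$. If $t\equiv u$ and $t\multimap_{\mathtt x} t'$, then there exists $u'$ such that $u\multimap_{\mathtt x} u'$ and $t'\equiv u'$.
   Context: Terms: $t,u,w ::= x \mid v \mid t\,u \mid t[x\leftarrow u]$, values $v ::= \lambda x.t$; $\lambda x.t$ and $t[x\leftarrow u]$ bind $x$ in $t$; terms are up to $\alpha$-equivalence, rewriting is capture-avoiding. Contexts are terms with one hole $\langle\cdot\rangle$. Weak contexts: $W ::= \langle\cdot\rangle \mid W\,u \mid t\,W \mid W[x\leftarrow u] \mid t[x\leftarrow W]$. Substitution contexts: $L ::= \langle\cdot\rangle \mid L[x\leftarrow t]$. Root rules (for a family of contexts $C$, with $C$ not capturing $x$): dB: $L\langle\lambda x.t\rangle u \mapsto L\langle t[x\leftarrow u]\rangle$; dBv: $L\langle\lambda x.t\rangle L'\langle v\rangle \mapsto L\langle t[x\leftarrow L'\langle v\rangle]\rangle$; ls w.r.t. $C$: $C\langle x\rangle[x\leftarrow u]\mapsto C\langle u\rangle[x\leftarrow u]$; lsv w.r.t. $C$: $C\langle x\rangle[x\leftarrow L\langle v\rangle]\mapsto L\langle C\langle v\rangle[x\leftarrow v]\rangle$. Calculi (evaluation contexts; $\mapsto_{\mathtt m}$; $\mapsto_{\mathtt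 e}$): ${\tt Name}$: $H ::= \langle\cdot\rangle \mid H\,t \mid H[x\leftarrow t]$; dB; ls w.r.t. $H$. ${\tt Value}^{\tt LR}$: $V ::= \langle\cdot\rangle \mid V\,t \mid L\langle v\rangle V \mid V[x\leftarrow t]$; dBv; lsv w.r.t. $V$. ${\tt Value}^{\tt RL}$: $S ::= \langle\cdot\rangle \mid S\,L\langle v\rangle \mid t\,S \mid S[x\leftarrow t]$; dBv; lsv w.r.t. $S$. ${\tt Need}$: $N ::= \langle\cdot\rangle \mid N\,t \mid N[x\leftarrow t] \mid N'\langle x\rangle[x\leftarrow N]$; dB; lsv w.r.t. $N$. Then $\multimap_{\mathtt m}:=E\langle\mapsto_{\mathtt m}\rangle$, $\multimap_{\mathtt e}:=E\langle\mapsto_{\mathtt e}\rangle$ for $E$ ranging over the evaluation contexts. Structural axioms: (gc) $t[x\leftarrow u]\equiv t$ if $x\notin\mathrm{fv}(t)$; (dup) $t[x\leftarrow u]\equiv t_{[y]_x}[x\leftarrow u][y\leftarrow u]$ where $t_{[y]_x}$ is obtained from $t$ by renaming some (possibly none) occurrences of $x$ as $y$; (@) $(t\,w)[x\leftarrow u]\equiv t[x\leftarrow u]\,w[x\leftarrow u]$; (com) $t[x\leftarrow u][y\leftarrow w]\equiv t[y\leftarrow w][x\leftarrow u]$ if $y\notin\mathrm{fv}(u)$ and $x\notin\mathrm{fv}(w)$; ([$\cdot$]) $t[x\leftarrow u][y\leftarrow w]\equiv t[x\leftarrow u[y\leftarrow w]]$ if $y\notin\mathrm{fv}(t)$; (@l)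 $(t\,w)[x\leftarrow u]\equiv t[x\leftarrow u]\,w$ if $x\notin\mathrm{fv}(w)$. For ${\tt Name}$, ${\tt Value}^{\tt LR}$, ${\tt Value}^{\tt RL}$, $\equiv$ is the smallest equivalence relation containing the closure under weak contexts of $\alpha$-equivalence, gc, dup, @, com and [$\cdot$]. For ${\tt Need}$, $\equiv$ is the equivalence generated by @l, com and [$\cdot$] (closed under weak contexts). *)

theory Defs
  imports Main
begin

text \<open>Terms up to alpha-equivalence are represented with de Bruijn indices.
  Var i: variable; Lam t: abstraction (body t, bound variable = index 0);
  App t u: application; ES t u: explicit substitution t[x<-u], where x is
  index 0 in t (ES binds in its first argument only).\<close>

datatype trm = Var nat | Lam trm | App trm trm | ES trm trm

fun lift :: "nat \<Rightarrow> nat \<Rightarrow> trm \<Rightarrow> trm" where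
  "lift c k (Var i) = (if i < c then Var i else Var (i + k))"
| "lift c k (Lam t) = Lam (lift (Suc c) k t)"
| "lift c k (App t u) = App (lift c k t) (lift c k u)"
| "lift c k (ES t u) = ES (lift (Suc c) k t) (lift c k u)"

fun swap :: "nat \<Rightarrow> trm \<Rightarrow> trm" where
  "swap c (Var i) = (if i = c then Var (Suc c) else if i = Suc c then Var c else Var i)"
| "swap c (Lam t) = Lam (swap (Suc c) t)"
| "swap c (App t u) = App (swap c t) (swap c u)"
| "swap c (ES t u) = ES (swap (Suc c) t) (swap c u)"

text \<open>ren_some c t t': t' is t in which a new binder y is inserted just above
  the binder x (index c), and some (possibly none) occurrences of x are renamed
  to y: in t', index c is x and index c+1 is y.\<close>
inductive ren_some :: "nat \<Rightarrow> trm \<Rightarrow> trm \<Rightarrow> bool" where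
  rs_lt: "i < c \<Longrightarrow> ren_some c (Var i) (Var i)"
| rs_keep: "ren_some c (Var c) (Var c)"
| rs_ren: "ren_some c (Var c) (Var (Suc c))"
| rs_gt: "c < i \<Longrightarrow> ren_some c (Var i) (Var (Suc i))"
| rs_lam: "ren_some (Suc c) t t' \<Longrightarrow> ren_some c (Lam t) (Lam t')"
| rs_app: "ren_some c t t' \<Longrightarrow> ren_some c u u' \<Longrightarrow> ren_some c (App t u) (App t' u')"
| rs_es: "ren_some (Suc c) t t' \<Longrightarrow> ren_some c u u' \<Longrightarrow> ren_some c (ES t u) (ES t' u')"

text \<open>Weak contexts (the only contexts used: no hole under a lambda).\<close>
datatype ctx = Hole | CAppL ctx trm | CAppR trm ctx | CESL ctx trm | CESR trm ctx

fun plug :: "ctx \<Rightarrow> trm \<Rightarrow> trm" where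
  "plug Hole s = s"
| "plug (CAppL C t) s = App (plug C s) t"
| "plug (CAppR t C) s = App t (plug C s)"
| "plug (CESL C t) s = ES (plug C s) t"
| "plug (CESR t C) s = ES t (plug C s)"

fun depth :: "ctx \<Rightarrow> nat" where
  "depth Hole = 0"
| "depth (CAppL C t) = depth C"
| "depth (CAppR t C) = depth C"
| "depth (CESL C t) = Suc (depth C)"
| "depth (CESR t C) = depth C"

fun cshift :: "nat \<Rightarrow> nat \<Rightarrow> ctx \<Rightarrow> ctx" where
  "cshift c k Hole = Hole"
| "cshift c k (CAppL C t) = CAppL (cshift c k C) (lift c k t)"
| "cshift c k (CAppR t C) = CAppR (lift c k t) (cshift c k C)"
| "cshift c k (CESL C t) = CESL (cshift (Suc c) k C) (lift c k t)"
| "cshift c k (CESR t C) = CESR (lift (Suc c) k t) (cshift c k C)"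

inductive is_L :: "ctx \<Rightarrow> bool" where
  "is_L Hole"
| "is_L L \<Longrightarrow> is_L (CESL L t)"

inductive is_H :: "ctx \<Rightarrow> bool" where
  "is_H Hole"
| "is_H H \<Longrightarrow> is_H (CAppL H t)"
| "is_H H \<Longrightarrow> is_H (CESL H t)"

inductive is_V :: "ctx \<Rightarrow> bool" where
  "is_V Hole"
| "is_V V \<Longrightarrow> is_V (CAppL V t)"
| "is_L L \<Longrightarrow> is_V V \<Longrightarrow> is_V (CAppR (plug L (Lam t)) V)"
| "is_V V \<Longrightarrow> is_V (CESL V t)"

inductive is_S :: "ctx \<Rightarrow> bool" where
  "is_S Hole"
| "is_L L \<Longrightarrow> is_S S \<Longrightarrow> is_S (CAppL S (plug L (Lam t)))"
| "is_S S \<Longrightarrow> is_S (CAppR t S)"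
| "is_S S \<Longrightarrow> is_S (CESL S t)"

inductive is_N :: "ctx \<Rightarrow> bool" where
  "is_N Hole"
| "is_N N \<Longrightarrow> is_N (CAppL N t)"
| "is_N N \<Longrightarrow> is_N (CESL N t)"
| "is_N N' \<Longrightarrow> is_N N \<Longrightarrow> is_N (CESR (plug N' (Var (depth N'))) N)"

text \<open>Root rules. In "plug C (Var (depth C))" the hole variable is the one bound
  by the enclosing ES, i.e. C does not capture it.\<close>
inductive dB_root :: "trm \<Rightarrow> trm \<Rightarrow> bool" where
  "is_L L \<Longrightarrow> dB_root (App (plug L (Lam t)) u) (plug L (ES t (lift 0 (depth L) u)))"

inductive dBv_root :: "trm \<Rightarrow> trm \<Rightarrow> bool" where
  "is_L L \<Longrightarrow> is_L L' \<Longrightarrow>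
    dBv_root (App (plug L (Lam t)) (plug L' (Lam s)))
             (plug L (ES t (lift 0 (depth L) (plug L' (Lam s)))))"

inductive ls_root :: "(ctx \<Rightarrow> bool) \<Rightarrow> trm \<Rightarrow> trm \<Rightarrow> bool" for P where
  "P C \<Longrightarrow> ls_root P (ES (plug C (Var (depth C))) u)
                      (ES (plug C (lift 0 (Suc (depth C)) u)) u)"

inductive lsv_root :: "(ctx \<Rightarrow> bool) \<Rightarrow> trm \<Rightarrow> trm \<Rightarrow> bool" for P where
  "P C \<Longrightarrow> is_L L \<Longrightarrow>
    lsv_root P (ES (plug C (Var (depth C))) (plug L (Lam s)))
      (plug L (ES (plug (cshift 1 (depth L) C) (lift 0 (Suc (depth C)) (Lam s))) (Lam s)))"

datatype calculus = Name | ValueLR | ValueRL | Need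
datatype kind = M | E

fun evctx :: "calculus \<Rightarrow> ctx \<Rightarrow> bool" where
  "evctx Name = is_H"
| "evctx ValueLR = is_V"
| "evctx ValueRL = is_S"
| "evctx Need = is_N"

fun root :: "calculus \<Rightarrow> kind \<Rightarrow> trm \<Rightarrow> trm \<Rightarrow> bool" where
  "root Name M = dB_root"
| "root ValueLR M = dBv_root"
| "root ValueRL M = dBv_root"
| "root Need M = dB_root"
| "root Name E = ls_root is_H"
| "root ValueLR E = lsv_root is_V"
| "root ValueRL E = lsv_root is_S"
| "root Need E = lsv_root is_N"

definition red :: "calculus \<Rightarrow> kind \<Rightarrow> trm \<Rightarrow> trm \<Rightarrow> bool" where
  "red c x t t' \<longleftrightarrow> (\<exists>Ev s s'. evctx c Ev \<and> root c x s s' \<and> t = plug Ev s \<and> t' = plug Ev s')"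

text \<open>Structural axioms (alpha-equivalence is syntactic identity here).\<close>
inductive str_ax :: "trm \<Rightarrow> trm \<Rightarrow> bool" where
  ax_gc: "str_ax (ES (lift 0 1 t) u) t"
| ax_dup: "ren_some 0 t t' \<Longrightarrow> str_ax (ES t u) (ES (ES t' (lift 0 1 u)) u)"
| ax_app: "str_ax (ES (App t w) u) (App (ES t u) (ES w u))"
| ax_com: "str_ax (ES (ES t (lift 0 1 u)) w) (ES (ES (swap 0 t) (lift 0 1 w)) u)"
| ax_sub: "str_ax (ES (ES (lift 1 1 t) u) w) (ES t (ES u w))"

inductive need_ax :: "trm \<Rightarrow> trm \<Rightarrow> bool" where
  ax_appl: "need_ax (ES (App t (lift 0 1 w)) u) (App (ES t u) w)"
| ax_com: "need_ax (ES (ES t (lift 0 1 u)) w) (ES (ES (swap 0 t) (lift 0 1 w)) u)"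
| ax_sub: "need_ax (ES (ES (lift 1 1 t) u) w) (ES t (ES u w))"

fun axioms :: "calculus \<Rightarrow> trm \<Rightarrow> trm \<Rightarrow> bool" where
  "axioms Need = need_ax"
| "axioms Name = str_ax"
| "axioms ValueLR = str_ax"
| "axioms ValueRL = str_ax"

definition wclose :: "(trm \<Rightarrow> trm \<Rightarrow> bool) \<Rightarrow> trm \<Rightarrow> trm \<Rightarrow> bool" where
  "wclose R t u \<longleftrightarrow> (\<exists>W s s'. R s s' \<and> t = plug W s \<and> u = plug W s')"

definition streq :: "calculus \<Rightarrow> trm \<Rightarrow> trm \<Rightarrow> bool" where
  "streq c = equivclp (wclose (axioms c))"

end

theory Submission
  imports Defs
begin

text \<open>Reduction is first recast as a syntax-directed relation, in which the evaluation context
  is located by recursion on the term. Structural equivalence is the equivalence closure of single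
  axiom instances under weak contexts, so it suffices that every such single step is a simulation.
  Inside a context this holds because the position of the head variable, being an answer
  \<open>L\<langle>v\<rangle>\<close>, and the shape of the contracta are invariant under structural steps. At the root
  the axioms are checked one by one; where a reduction overlaps an axiom, the two contracta are
  related by explicit chains of axioms, built from pushing a substitution through a spine of
  substitutions and from copying a substitution into the hole of a weak context.\<close>

section \<open>De Bruijn terms and renamings\<close>

lemma lift_0[simp]: "lift c 0 t = t"
  by (induction t arbitrary: c) auto

lemma lift_lift: "n \<le> m \<Longrightarrow> m \<le> n + k \<Longrightarrow> lift m l (lift n k t) = lift n (k + l) t"
  by (induction t arbitrary: n m) auto

lemma swap_swap[simp]: "swap c (swap c t) = t"
  by (induction t arbitrary: c) auto

definition up :: "(nat \<Rightarrow> nat) \<Rightarrow> nat \<Rightarrow> nat" where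
  "up f i = (case i of 0 \<Rightarrow> 0 | Suc j \<Rightarrow> Suc (f j))"

lemma up_0[simp]: "up f 0 = 0" and up_Suc[simp]: "up f (Suc j) = Suc (f j)"
  by (auto simp: up_def)

lemma up_eq: "up f i = (if i = 0 then 0 else Suc (f (i - 1)))"
  by (cases i) auto

fun rename :: "(nat \<Rightarrow> nat) \<Rightarrow> trm \<Rightarrow> trm" where
  "rename f (Var i) = Var (f i)"
| "rename f (Lam t) = Lam (rename (up f) t)"
| "rename f (App t u) = App (rename f t) (rename f u)"
| "rename f (ES t u) = ES (rename (up f) t) (rename f u)"

lemma rename_cong: "(\<And>i. f i = g i) \<Longrightarrow> rename f t = rename g t"
  by (metis ext)

lemma up_comp: "up f (up g i) = up (\<lambda>j. f (g j)) i"
  by (cases i) auto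

lemma rename_rename[simp]: "rename f (rename g t) = rename (\<lambda>i. f (g i)) t"
proof (induction t arbitrary: f g)
  case (Lam t) thus ?case using rename_cong[of "\<lambda>i. up f (up g i)" "up (\<lambda>j. f (g j))" t] up_comp by simp
next
  case (ES t u) thus ?case using rename_cong[of "\<lambda>i. up f (up g i)" "up (\<lambda>j. f (g j))" t] up_comp by simp
qed auto

lemma up_id: "up id = id" "up (\<lambda>x. x) = (\<lambda>x. x)"
  by (auto simp: fun_eq_iff split: nat.split simp: up_def)

lemma rename_id[simp]: "rename id t = t" "rename (\<lambda>x. x) t = t"
  by (induction t) (auto simp: up_id)

lemma rename_id_cong: "(\<And>i. f i = i) \<Longrightarrow> rename f t = t"
  by (rule trans[OF rename_cong rename_id(2)]) auto

definition lift_idx :: "nat \<Rightarrow> nat \<Rightarrow> nat \<Rightarrow> nat" where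
  "lift_idx c k i = (if i < c then i else i + k)"

lemma up_lift_idx: "up (lift_idx c k) = lift_idx (Suc c) k"
  by (auto simp: fun_eq_iff lift_idx_def up_def split: nat.split)

lemma lift_eq_rename: "lift c k t = rename (lift_idx c k) t"
  by (induction t arbitrary: c) (auto simp: up_lift_idx lift_idx_def)

definition swap_idx :: "nat \<Rightarrow> nat \<Rightarrow> nat" where
  "swap_idx c i = (if i = c then Suc c else if i = Suc c then c else i)"

lemma up_swap_idx: "up (swap_idx c) = swap_idx (Suc c)"
  by (auto simp: fun_eq_iff swap_idx_def up_def split: nat.split)

lemma swap_eq_rename: "swap c t = rename (swap_idx c) t"
  by (induction t arbitrary: c) (auto simp: up_swap_idx swap_idx_def)

definition merge_idx :: "nat \<Rightarrow> nat \<Rightarrow> nat" where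
  "merge_idx c i = (if i \<le> c then i else i - 1)"

lemma up_merge_idx: "up (merge_idx c) = merge_idx (Suc c)"
  by (auto simp: fun_eq_iff merge_idx_def up_def split: nat.split)

lemma ren_some_iff: "ren_some c t t' \<longleftrightarrow> rename (merge_idx c) t' = t"
proof
  assume "ren_some c t t'" thus "rename (merge_idx c) t' = t"
    by (induction rule: ren_some.induct) (simp_all only: rename.simps up_merge_idx; simp add: merge_idx_def)+
next
  assume "rename (merge_idx c) t' = t"
  thus "ren_some c t t'"
  proof (induction t' arbitrary: c t)
    case (Var i)
    show ?case
    proof (cases "i < c")
      case True thus ?thesis using Var by (auto simp: merge_idx_def intro: ren_some.intros)
    next
      case False
      hence "i = c \<or> i = Suc c \<or> i > Suc c" by auto
      thus ?thesis using Var ren_some.intros(2-4)[of c] ren_some.intros(4)[of c "i - 1"]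
        by (auto simp: merge_idx_def)
    qed
  qed (simp_all add: up_merge_idx; auto intro: ren_some.intros)+
qed

fun upn :: "nat \<Rightarrow> (nat \<Rightarrow> nat) \<Rightarrow> nat \<Rightarrow> nat" where
  "upn 0 f = f"
| "upn (Suc n) f = up (upn n f)"

lemma upn_up: "upn n (up f) = up (upn n f)"
  by (induction n) auto

lemma upn_eq: "upn n f i = (if i < n then i else n + f (i - n))"
proof (induction n arbitrary: i)
  case (Suc n) thus ?case by (cases i) (auto simp: up_def)
qed auto

lemma upn_swap_idx: "upn m (swap_idx c) = swap_idx (m + c)"
  by (induction m) (auto simp: up_swap_idx)

fun ctx_rename :: "(nat \<Rightarrow> nat) \<Rightarrow> ctx \<Rightarrow> ctx" where
  "ctx_rename f Hole = Hole"
| "ctx_rename f (CAppL C t) = CAppL (ctx_rename f C) (rename f t)"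
| "ctx_rename f (CAppR t C) = CAppR (rename f t) (ctx_rename f C)"
| "ctx_rename f (CESL C t) = CESL (ctx_rename (up f) C) (rename f t)"
| "ctx_rename f (CESR t C) = CESR (rename (up f) t) (ctx_rename f C)"

lemma depth_ctx_rename[simp]: "depth (ctx_rename f C) = depth C"
  by (induction C arbitrary: f) auto

lemma ctx_rename_ctx_rename[simp]: "ctx_rename f (ctx_rename g C) = ctx_rename (\<lambda>i. f (g i)) C"
proof (induction C arbitrary: f g)
  case (CESL C t) thus ?case by (simp add: up_comp[symmetric] comp_def) (metis (no_types) up_comp rename_cong)
qed (auto simp: up_comp)

lemma ctx_rename_cong: "(\<And>i. f i = g i) \<Longrightarrow> ctx_rename f C = ctx_rename g C"
  by (metis ext)

lemma ctx_rename_id[simp]: "ctx_rename (\<lambda>i. i) C = C"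
  by (induction C) (auto simp: up_id)

lemma rename_plug: "rename f (plug C s) = plug (ctx_rename f C) (rename (upn (depth C) f) s)"
proof (induction C arbitrary: f)
  case (CESL C t)
  thus ?case using upn_up[of "depth C" f] by simp
qed auto

lemma lift_plug: "lift n k (plug C s) = plug (cshift n k C) (lift (n + depth C) k s)"
  by (induction C arbitrary: n) auto

lemma depth_cshift[simp]: "depth (cshift n k C) = depth C"
  by (induction C arbitrary: n) auto

lemma lift_rename_up: "lift 0 (Suc 0) (rename f w) = rename (up f) (lift 0 (Suc 0) w)"
  by (simp add: lift_eq_rename, rule rename_cong, simp add: lift_idx_def)

lemma lift1_rename_up: "lift (Suc 0) (Suc 0) (rename (up f) w) = rename (up (up f)) (lift (Suc 0) (Suc 0) w)"
  by (simp add: lift_eq_rename, rule rename_cong, auto simp: lift_idx_def up_def split: nat.split)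

lemma lift_lift_0: "lift 0 (Suc 0) (lift 0 (Suc 0) w) = lift 0 (Suc (Suc 0)) w"
  using lift_lift[of 0 0 1 1 w] by simp

lemma swap_lift_2: "swap 0 (lift 0 (Suc (Suc 0)) w) = lift 0 (Suc (Suc 0)) w"
  by (simp add: swap_eq_rename lift_eq_rename, rule rename_cong, simp add: swap_idx_def lift_idx_def)

lemma rename_merge0_lift0_2: "rename (merge_idx 0) (lift 0 (Suc (Suc 0)) w) = lift 0 (Suc 0) w"
  by (simp add: lift_eq_rename, rule rename_cong, simp add: merge_idx_def lift_idx_def)

lemma lift1_lift0: "lift (Suc 0) (Suc 0) (lift 0 (Suc 0) w) = lift 0 (Suc (Suc 0)) w"
  using lift_lift[of 0 1 1 1 w] by simp

lemma rename_merge0_lift0[simp]: "rename (merge_idx 0) (lift 0 (Suc 0) X) = X"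
  by (simp add: lift_eq_rename, rule rename_id_cong, simp add: merge_idx_def lift_idx_def)

lemma rename_merge1_lift1[simp]: "rename (merge_idx (Suc 0)) (lift (Suc 0) (Suc 0) X) = X"
  by (simp add: lift_eq_rename, rule rename_id_cong, simp add: merge_idx_def lift_idx_def)

lemma rename_merge0_lift1[simp]: "rename (merge_idx 0) (lift (Suc 0) (Suc 0) X) = X"
  by (simp add: lift_eq_rename, rule rename_id_cong, simp add: merge_idx_def lift_idx_def)

lemma rename_merge1_lift2[simp]: "rename (merge_idx (Suc 0)) (lift (Suc (Suc 0)) (Suc 0) X) = X"
  by (simp add: lift_eq_rename, rule rename_id_cong, simp add: merge_idx_def lift_idx_def)

lemma swap_rename_up2: "swap 0 (rename (up (up f)) t) = rename (up (up f)) (swap 0 t)"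
  by (simp add: swap_eq_rename, rule rename_cong, auto simp: swap_idx_def up_def split: nat.split)

lemma merge_rename_up2: "rename (merge_idx 0) (rename (up (up f)) t') = rename (up f) (rename (merge_idx 0) t')"
  by (simp, rule rename_cong, auto simp: merge_idx_def up_def split: nat.split)

section \<open>Syntax-directed reduction\<close>

text \<open>\<open>head_var c t = Some k\<close> says that \<open>t = E\<langle>x\<rangle>\<close> for an evaluation context \<open>E\<close> of \<open>c\<close>, the
  variable \<open>x\<close> having index \<open>k\<close> outside \<open>E\<close>, and \<open>subst_head c w t\<close> replaces this occurrence
  by \<open>w\<close>; \<open>is_answer t\<close> says \<open>t = L\<langle>\<lambda>x.s\<rangle>\<close>. Then \<open>dB_contr u t\<close> is the contractum of
  \<open>t u\<close> and \<open>lsv_contr c t u\<close> that of \<open>t[x\<leftarrow>u]\<close>.\<close>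

fun is_answer :: "trm \<Rightarrow> bool" where
  "is_answer (Lam s) = True"
| "is_answer (ES a b) = is_answer a"
| "is_answer _ = False"

fun eval_left :: "calculus \<Rightarrow> trm \<Rightarrow> trm \<Rightarrow> bool" where
  "eval_left Name a b = True"
| "eval_left Need a b = True"
| "eval_left ValueLR a b = (\<not> is_answer a)"
| "eval_left ValueRL a b = is_answer b"

fun head_var :: "calculus \<Rightarrow> trm \<Rightarrow> nat option" where
  "head_var c (Var i) = Some i"
| "head_var c (Lam s) = None"
| "head_var c (App a b) = (if eval_left c a b then head_var c a else head_var c b)"
| "head_var c (ES a b) = (case head_var c a of None \<Rightarrow> None
     | Some 0 \<Rightarrow> (if c = Need then head_var c b else None) | Some (Suc k) \<Rightarrow> Some k)"

fun subst_head :: "calculus \<Rightarrow> trm \<Rightarrow> trm \<Rightarrow> trm" where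
  "subst_head c w (Var i) = w"
| "subst_head c w (Lam s) = Lam s"
| "subst_head c w (App a b) = (if eval_left c a b then App (subst_head c w a) b else App a (subst_head c w b))"
| "subst_head c w (ES a b) = (if head_var c a = Some 0 then ES a (subst_head c w b) else ES (subst_head c (lift 0 1 w) a) b)"

fun dB_contr :: "trm \<Rightarrow> trm \<Rightarrow> trm" where
  "dB_contr w (Lam s) = ES s w"
| "dB_contr w (ES a b) = ES (dB_contr (lift 0 1 w) a) b"
| "dB_contr w t = t"

fun lsv_contr :: "calculus \<Rightarrow> trm \<Rightarrow> trm \<Rightarrow> trm" where
  "lsv_contr c a (Lam s) = ES (subst_head c (lift 0 1 (Lam s)) a) (Lam s)"
| "lsv_contr c a (ES u1 u2) = ES (lsv_contr c (lift 1 1 a) u1) u2"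
| "lsv_contr c a t = t"

inductive step :: "calculus \<Rightarrow> kind \<Rightarrow> trm \<Rightarrow> trm \<Rightarrow> bool" where
  step_dB: "is_answer a \<Longrightarrow> (c = ValueLR \<or> c = ValueRL \<longrightarrow> is_answer b) \<Longrightarrow> step c M (App a b) (dB_contr b a)"
| step_ls: "head_var c a = Some 0 \<Longrightarrow> c = Name \<Longrightarrow> step c E (ES a u) (ES (subst_head c (lift 0 1 u) a) u)"
| step_lsv: "head_var c a = Some 0 \<Longrightarrow> c \<noteq> Name \<Longrightarrow> is_answer u \<Longrightarrow> step c E (ES a u) (lsv_contr c a u)"
| step_AppL: "step c x a a' \<Longrightarrow> eval_left c a b \<Longrightarrow> step c x (App a b) (App a' b)"
| step_AppR: "step c x b b' \<Longrightarrow> \<not> eval_left c a b \<Longrightarrow> step c x (App a b) (App a b')"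
| step_ESL: "step c x a a' \<Longrightarrow> step c x (ES a b) (ES a' b)"
| step_ESR: "step c x b b' \<Longrightarrow> c = Need \<Longrightarrow> head_var c a = Some 0 \<Longrightarrow> step c x (ES a b) (ES a b')"

lemma step_ls': "head_var c a = Some 0 \<Longrightarrow> c = Name \<Longrightarrow> step c E (ES a u) (ES (subst_head c (lift 0 (Suc 0) u) a) u)"
  using step_ls by simp

lemma is_answer_plug: "is_L L \<Longrightarrow> is_answer (plug L (Lam s))"
  by (induction rule: is_L.induct) auto

lemma is_answerE: "is_answer a \<Longrightarrow> \<exists>L s. is_L L \<and> a = plug L (Lam s)"
proof (induction a)
  case (Lam s) thus ?case by (intro exI[of _ Hole]) (auto intro: is_L.intros)
next
  case (ES a b)
  then obtain L s where "is_L L" "a = plug L (Lam s)" by auto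
  thus ?case by (intro exI[of _ "CESL L b"] exI[of _ s]) (auto intro: is_L.intros)
qed auto

lemma evctx_Hole: "evctx c Hole"
  by (cases c) (auto intro: is_H.intros is_V.intros is_S.intros is_N.intros)

lemma evctx_CAppL: "evctx c C \<Longrightarrow> eval_left c a b \<Longrightarrow> evctx c (CAppL C b)"
  by (cases c) (auto intro: is_H.intros is_V.intros is_S.intros is_N.intros dest!: is_answerE)

lemma evctx_CAppR: "evctx c C \<Longrightarrow> \<not> eval_left c a b \<Longrightarrow> evctx c (CAppR a C)"
  by (cases c) (auto intro: is_V.intros is_S.intros dest!: is_answerE)

lemma evctx_CESL: "evctx c C \<Longrightarrow> evctx c (CESL C t)"
  by (cases c) (auto intro: is_H.intros is_V.intros is_S.intros is_N.intros)

lemma is_answer_lift[simp]: "is_answer (lift n k a) = is_answer a"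
  by (induction a arbitrary: n) auto

lemma dB_contr_plug: "is_L L \<Longrightarrow> dB_contr w (plug L (Lam s)) = plug L (ES s (lift 0 (depth L) w))"
proof (induction L arbitrary: w rule: is_L.induct)
  case (2 L t) thus ?case by (simp add: lift_lift)
qed auto

lemma lsv_contr_plug: "is_L L \<Longrightarrow> lsv_contr c a (plug L (Lam s)) =
   plug L (ES (subst_head c (lift 0 1 (Lam s)) (lift 1 (depth L) a)) (Lam s))"
proof (induction L arbitrary: a rule: is_L.induct)
  case (2 L t) thus ?case by (simp add: lift_lift)
qed auto

lemma not_is_answer_plug_V: "is_V V \<Longrightarrow> \<not> is_answer (plug V (Var i))"
  by (induction rule: is_V.induct) auto

lemma not_is_answer_plug_S: "is_S V \<Longrightarrow> \<not> is_answer (plug V (Var i))"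
  by (induction rule: is_S.induct) auto

lemma head_var_plug_H: "is_H C \<Longrightarrow> head_var Name (plug C (Var (depth C + k))) = Some k
   \<and> subst_head Name w (plug C (Var (depth C + k))) = plug C (lift 0 (depth C) w)"
proof (induction arbitrary: k w rule: is_H.induct)
  case (3 H t) thus ?case using "3.IH"[of "Suc k" "lift 0 1 w"] by (simp add: lift_lift)
qed auto

lemma head_var_plug_V: "is_V C \<Longrightarrow> head_var ValueLR (plug C (Var (depth C + k))) = Some k
   \<and> subst_head ValueLR w (plug C (Var (depth C + k))) = plug C (lift 0 (depth C) w)"
proof (induction arbitrary: k w rule: is_V.induct)
  case (2 V t) thus ?case using not_is_answer_plug_V[of V] by simp
next
  case (3 L V t) thus ?case using is_answer_plug[of L t] by simp
next
  case (4 V t) thus ?case using "4.IH"[of "Suc k" "lift 0 1 w"] by (simp add: lift_lift)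
qed auto

lemma head_var_plug_S: "is_S C \<Longrightarrow> head_var ValueRL (plug C (Var (depth C + k))) = Some k
   \<and> subst_head ValueRL w (plug C (Var (depth C + k))) = plug C (lift 0 (depth C) w)"
proof (induction arbitrary: k w rule: is_S.induct)
  case (2 L S t) thus ?case using is_answer_plug[of L t] by simp
next
  case (3 S t) thus ?case using not_is_answer_plug_S[of S] by simp
next
  case (4 V t) thus ?case using "4.IH"[of "Suc k" "lift 0 1 w"] by (simp add: lift_lift)
qed auto

lemma head_var_plug_N: "is_N C \<Longrightarrow> head_var Need (plug C (Var (depth C + k))) = Some k
   \<and> subst_head Need w (plug C (Var (depth C + k))) = plug C (lift 0 (depth C) w)"
proof (induction arbitrary: k w rule: is_N.induct)
  case (3 N t) thus ?case using "3.IH"[of "Suc k" "lift 0 1 w"] by (simp add: lift_lift)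
next
  case (4 N' N) thus ?case using "4.IH"(1)[of 0] by simp
qed auto

lemma head_var_plug: "evctx c C \<Longrightarrow> head_var c (plug C (Var (depth C + k))) = Some k
   \<and> subst_head c w (plug C (Var (depth C + k))) = plug C (lift 0 (depth C) w)"
  by (cases c) (auto simp: head_var_plug_H head_var_plug_V head_var_plug_S head_var_plug_N)

lemma head_varE: "head_var c a = Some k \<Longrightarrow> \<exists>C. evctx c C \<and> a = plug C (Var (depth C + k))"
proof (induction a arbitrary: k)
  case (Var i) thus ?case using evctx_Hole by (metis add_0 depth.simps(1) head_var.simps(1) option.inject plug.simps(1))
next
  case (App a b)
  show ?case
  proof (cases "eval_left c a b")
    case True
    with App obtain C where "evctx c C" "a = plug C (Var (depth C + k))" by auto
    thus ?thesis using True evctx_CAppL by (intro exI[of _ "CAppL C b"]) auto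
  next
    case False
    with App obtain C where "evctx c C" "b = plug C (Var (depth C + k))" by auto
    thus ?thesis using False evctx_CAppR by (intro exI[of _ "CAppR a C"]) auto
  qed
next
  case (ES a b)
  then obtain j where j: "head_var c a = Some j" by (auto split: option.splits)
  show ?case
  proof (cases j)
    case 0
    with ES j have "c = Need" and "head_var c b = Some k" by (auto split: if_splits)
    moreover obtain C where "evctx c C" "b = plug C (Var (depth C + k))" using ES.IH(2) calculation(2) by blast
    moreover obtain C' where "evctx c C'" "a = plug C' (Var (depth C'))" using ES.IH(1)[of 0] j 0 by auto
    ultimately show ?thesis by (intro exI[of _ "CESR a C"]) (auto intro: is_N.intros)
  next
    case (Suc j')
    with ES j have "k = j'" by simp
    then obtain C where "evctx c C" "a = plug C (Var (depth C + Suc k))" using ES.IH(1) j Suc by blast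
    thus ?thesis using evctx_CESL by (intro exI[of _ "CESL C b"]) auto
  qed
qed auto

lemma is_L_cshift: "is_L L \<Longrightarrow> is_L (cshift n k L)"
  by (induction L arbitrary: n rule: is_L.induct) (auto intro: is_L.intros)

lemma is_H_cshift: "is_H C \<Longrightarrow> is_H (cshift n k C)"
  by (induction C arbitrary: n rule: is_H.induct) (auto intro: is_H.intros)

lemma is_V_cshift: "is_V C \<Longrightarrow> is_V (cshift n k C)"
proof (induction C arbitrary: n rule: is_V.induct)
  case (3 L V t)
  have "lift n k (plug L (Lam t)) = plug (cshift n k L) (Lam (lift (Suc (n + depth L)) k t))"
    by (simp add: lift_plug)
  thus ?case using 3 is_L_cshift[OF 3(1)] by (auto intro: is_V.intros)
qed (auto intro: is_V.intros)

lemma is_S_cshift: "is_S C \<Longrightarrow> is_S (cshift n k C)"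
proof (induction C arbitrary: n rule: is_S.induct)
  case (2 L S t)
  have "lift n k (plug L (Lam t)) = plug (cshift n k L) (Lam (lift (Suc (n + depth L)) k t))"
    by (simp add: lift_plug)
  thus ?case using 2 is_L_cshift[OF 2(1)] by (auto intro: is_S.intros)
qed (auto intro: is_S.intros)

lemma is_N_cshift: "is_N C \<Longrightarrow> is_N (cshift n k C)"
proof (induction C arbitrary: n rule: is_N.induct)
  case (4 N' N)
  have "lift (Suc n) k (plug N' (Var (depth N'))) = plug (cshift (Suc n) k N') (Var (depth (cshift (Suc n) k N')))"
    by (simp add: lift_plug)
  thus ?case using 4 is_N.intros(4)[of "cshift (Suc n) k N'" "cshift n k N"] by simp
qed (auto intro: is_N.intros)

lemma evctx_cshift: "evctx c C \<Longrightarrow> evctx c (cshift n k C)"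
  by (cases c) (simp_all add: is_H_cshift is_V_cshift is_S_cshift is_N_cshift)

lemma lsv_contr_plug_evctx: "is_L L \<Longrightarrow> evctx c C \<Longrightarrow>
  lsv_contr c (plug C (Var (depth C))) (plug L (Lam s)) =
  plug L (ES (plug (cshift 1 (depth L) C) (lift 0 (Suc (depth C)) (Lam s))) (Lam s))"
proof -
  assume L: "is_L L" and C: "evctx c C"
  have 1: "lift 1 (depth L) (plug C (Var (depth C))) = plug (cshift 1 (depth L) C) (Var (depth (cshift 1 (depth L) C) + 0))"
    by (simp add: lift_plug)
  have 2: "subst_head c (lift 0 1 (Lam s)) (plug (cshift 1 (depth L) C) (Var (depth (cshift 1 (depth L) C) + 0)))
     = plug (cshift 1 (depth L) C) (lift 0 (depth C) (lift 0 1 (Lam s)))"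
    using head_var_plug[OF evctx_cshift[OF C, where n=1 and k="depth L"], where k=0 and w="lift 0 1 (Lam s)"] by simp
  have 3: "lift 0 (depth C) (lift 0 1 (Lam s)) = lift 0 (Suc (depth C)) (Lam s)"
    using lift_lift[of 0 0 1 "depth C" "Lam s"] by simp
  show ?thesis using lsv_contr_plug[OF L] 1 2 3 by simp
qed

lemma is_answer_head_var: "is_answer a \<Longrightarrow> head_var c a = None"
  by (induction a) auto

lemma step_not_answer: "step c x a a' \<Longrightarrow> \<not> is_answer a"
  by (induction rule: step.induct) (use is_answer_head_var in fastforce)+

lemma step_dB_plug:
  "is_L L \<Longrightarrow> (c = ValueLR \<or> c = ValueRL \<longrightarrow> is_answer b) \<Longrightarrow>
    step c M (App (plug L (Lam t)) b) (plug L (ES t (lift 0 (depth L) b)))"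
  using step_dB[of "plug L (Lam t)" c b] is_answer_plug dB_contr_plug by metis

lemma step_ls_plug:
  assumes "is_H C"
  shows "step Name E (ES (plug C (Var (depth C))) u) (ES (plug C (lift 0 (Suc (depth C)) u)) u)"
proof -
  have "head_var Name (plug C (Var (depth C))) = Some 0"
    and "subst_head Name (lift 0 1 u) (plug C (Var (depth C))) = plug C (lift 0 (Suc (depth C)) u)"
    using head_var_plug_H[OF assms, of 0 "lift 0 1 u"] lift_lift[of 0 0 1 "depth C" u] by auto
  thus ?thesis using step_ls[of Name "plug C (Var (depth C))" u] by simp
qed

lemma step_lsv_plug:
  assumes "evctx c C" "c \<noteq> Name" "is_L L"
  shows "step c E (ES (plug C (Var (depth C))) (plug L (Lam s)))
    (plug L (ES (plug (cshift 1 (depth L) C) (lift 0 (Suc (depth C)) (Lam s))) (Lam s)))"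
  using step_lsv[of c "plug C (Var (depth C))" "plug L (Lam s)"] head_var_plug[OF assms(1), of 0]
    lsv_contr_plug_evctx[OF assms(3,1)] is_answer_plug[OF assms(3)] assms(2) by simp

lemma root_imp_step: "root c x s s' \<Longrightarrow> step c x s s'"
  by (cases c; cases x)
     (auto elim!: dB_root.cases dBv_root.cases ls_root.cases lsv_root.cases
       intro: step_dB_plug step_ls_plug step_lsv_plug is_answer_plug)

lemma step_plug:
  assumes "evctx c Ev" and "step c x s s'"
  shows "step c x (plug Ev s) (plug Ev s')"
proof (cases c)
  case Name
  with assms(1) have "is_H Ev" by simp
  thus ?thesis using assms(2) Name by (induction rule: is_H.induct) (auto intro: step.intros)
next
  case ValueLR
  with assms(1) have "is_V Ev" by simp
  thus ?thesis using assms(2) ValueLR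
  proof (induction rule: is_V.induct)
    case (2 V t) thus ?case using step_not_answer by (auto intro: step.intros)
  next
    case (3 L V t) thus ?case using is_answer_plug[OF 3(1)] by (auto intro: step.intros)
  qed (auto intro: step.intros)
next
  case ValueRL
  with assms(1) have "is_S Ev" by simp
  thus ?thesis using assms(2) ValueRL
  proof (induction rule: is_S.induct)
    case (2 L S t) thus ?case using is_answer_plug[OF 2(1)] by (auto intro: step.intros)
  next
    case (3 S t) thus ?case using step_not_answer by (auto intro: step.intros)
  qed (auto intro: step.intros)
next
  case Need
  with assms(1) have "is_N Ev" by simp
  thus ?thesis using assms(2) Need
  proof (induction rule: is_N.induct)
    case (4 N' N)
    have "head_var Need (plug N' (Var (depth N'))) = Some 0" using head_var_plug_N[OF 4(1), of 0] by simp
    thus ?case using 4 by (auto intro: step.intros)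
  qed (auto intro: step.intros)
qed

lemma red_imp_step: "red c x t t' \<Longrightarrow> step c x t t'"
  unfolding red_def using root_imp_step step_plug by blast

lemma root_imp_red: "root c x s s' \<Longrightarrow> red c x s s'"
  unfolding red_def using evctx_Hole by (metis plug.simps(1))

lemma red_plug_ctx:
  assumes "red c x s s'" and "\<And>Ev. evctx c Ev \<Longrightarrow> evctx c (F Ev)" and "\<And>Ev r. plug (F Ev) r = G (plug Ev r)"
  shows "red c x (G s) (G s')"
  using assms unfolding red_def by metis

lemma step_imp_red: "step c x t t' \<Longrightarrow> red c x t t'"
proof (induction rule: step.induct)
  case (step_dB a c b)
  then obtain L s where L: "is_L L" "a = plug L (Lam s)" using is_answerE by blast
  show ?case
  proof (cases "c = Name \<or> c = Need")
    case True
    hence "root c M (App a b) (dB_contr b a)" using L dB_contr_plug dB_root.intros by (cases c) auto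
    thus ?thesis by (rule root_imp_red)
  next
    case False
    with step_dB have "is_answer b" by (cases c) auto
    then obtain L' s' where L': "is_L L'" "b = plug L' (Lam s')" using is_answerE by blast
    have "root c M (App a b) (dB_contr b a)" using False L L' dB_contr_plug dBv_root.intros by (cases c) auto
    thus ?thesis by (rule root_imp_red)
  qed
next
  case (step_ls c a u)
  then obtain C where C: "evctx c C" "a = plug C (Var (depth C))" using head_varE[of c a 0] by auto
  have "subst_head c (lift 0 1 u) a = plug C (lift 0 (Suc (depth C)) u)"
    using head_var_plug[OF C(1), of 0] C(2) lift_lift[of 0 0 1 "depth C" u] by simp
  hence "root c E (ES a u) (ES (subst_head c (lift 0 1 u) a) u)" using step_ls C ls_root.intros[of is_H C u] by simp
  thus ?case by (rule root_imp_red)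
next
  case (step_lsv c a u)
  then obtain C where C: "evctx c C" "a = plug C (Var (depth C))" using head_varE[of c a 0] by auto
  from step_lsv obtain L s where L: "is_L L" "u = plug L (Lam s)" using is_answerE by blast
  have "root c E (ES a u) (lsv_contr c a u)"
    using step_lsv C L lsv_contr_plug_evctx[OF L(1) C(1)] lsv_root.intros[OF _ L(1), of "evctx c" C s]
    by (cases c) auto
  thus ?case by (rule root_imp_red)
next
  case (step_AppL c x a a' b)
  show ?case
    by (rule red_plug_ctx[OF step_AppL.IH, of "\<lambda>Ev. CAppL Ev b"]) (use step_AppL evctx_CAppL in auto)
next
  case (step_AppR c x b b' a)
  show ?case
    by (rule red_plug_ctx[OF step_AppR.IH, of "\<lambda>Ev. CAppR a Ev"]) (use step_AppR evctx_CAppR in auto)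
next
  case (step_ESL c x a a' b)
  show ?case by (rule red_plug_ctx[OF step_ESL.IH, of "\<lambda>Ev. CESL Ev b"]) (use evctx_CESL in auto)
next
  case (step_ESR c x b b' a)
  then obtain C where "evctx c C" "a = plug C (Var (depth C))" using head_varE[of c a 0] by auto
  thus ?case
    by (intro red_plug_ctx[OF step_ESR.IH, of "\<lambda>Ev. CESR a Ev"]) (use step_ESR in \<open>auto intro: is_N.intros\<close>)
qed

lemma red_eq_step: "red c x = step c x"
  using red_imp_step step_imp_red by blast

lemma is_answer_rename[simp]: "is_answer (rename f t) = is_answer t"
  by (induction t arbitrary: f) auto

lemma eval_left_rename[simp]: "eval_left c (rename f a) (rename f b) = eval_left c a b"
  by (cases c) auto

lemma head_var_rename: "head_var c (rename f t) = map_option f (head_var c t)"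
proof (induction t arbitrary: f)
  case (ES a b)
  show ?case
  proof (cases "head_var c a")
    case (Some j) thus ?thesis using ES by (cases j) auto
  qed (use ES in auto)
qed auto

lemma head_var_rename_up_0: "head_var c (rename (up f) a) = Some 0 \<longleftrightarrow> head_var c a = Some 0"
  by (simp add: head_var_rename) (metis up_0 up_Suc nat.distinct(1) not0_implies_Suc)

lemma subst_head_rename: "subst_head c (rename f w) (rename f t) = rename f (subst_head c w t)"
proof (induction t arbitrary: f w)
  case (ES a b)
  thus ?case by (simp add: head_var_rename_up_0 lift_rename_up)
qed auto

lemma dB_contr_rename: "dB_contr (rename f w) (rename f a) = rename f (dB_contr w a)"
proof (induction a arbitrary: f w)
  case (ES a b) thus ?case by (simp add: lift_rename_up)
qed auto

lemma lsv_contr_rename: "lsv_contr c (rename (up f) a) (rename f u) = rename f (lsv_contr c a u)"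
proof (induction u arbitrary: f a)
  case (Lam s) thus ?case using subst_head_rename[of c "up f" "Lam (lift (Suc 0) (Suc 0) s)" a] by (simp add: lift1_rename_up)
next
  case (ES u1 u2) thus ?case by (simp add: lift1_rename_up)
qed auto

lemma step_rename: "step c x a a' \<Longrightarrow> step c x (rename f a) (rename f a')"
proof (induction arbitrary: f rule: step.induct)
  case (step_dB a c b) thus ?case using step.step_dB[of "rename f a" c "rename f b"] by (simp add: dB_contr_rename)
next
  case (step_ls c a u) thus ?case using step.step_ls[of c "rename (up f) a" "rename f u"]
    by (simp add: head_var_rename_up_0 lift_rename_up subst_head_rename)
next
  case (step_lsv c a u) thus ?case using step.step_lsv[of c "rename (up f) a" "rename f u"]
    by (simp add: head_var_rename_up_0 lsv_contr_rename)
next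
  case (step_ESR c x b b' a) thus ?case using step.step_ESR[of c x "rename f b" "rename f b'" "rename (up f) a"]
    by (simp add: head_var_rename_up_0)
qed (auto intro: step.intros)

lemma rename_eq_App: "rename f a = App x y \<longleftrightarrow> (\<exists>a1 a2. a = App a1 a2 \<and> x = rename f a1 \<and> y = rename f a2)"
  by (cases a) auto

lemma rename_eq_ES: "rename f a = ES x y \<longleftrightarrow> (\<exists>a1 a2. a = ES a1 a2 \<and> x = rename (up f) a1 \<and> y = rename f a2)"
  by (cases a) auto

lemma step_rename_inv: "step c x (rename f a) b \<Longrightarrow> \<exists>a'. b = rename f a' \<and> step c x a a'"
proof (induction "rename f a" b arbitrary: f a rule: step.induct)
  case (step_dB a0 c b0)
  then obtain a1 a2 where "a = App a1 a2" "a0 = rename f a1" "b0 = rename f a2" by (metis rename_eq_App)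
  thus ?case using step_dB by (intro exI[of _ "dB_contr a2 a1"]) (auto simp: dB_contr_rename intro: step.intros)
next
  case (step_ls c a0 u)
  then obtain a1 a2 where a: "a = ES a1 a2" "a0 = rename (up f) a1" "u = rename f a2" by (metis rename_eq_ES)
  thus ?case using step_ls by (intro exI[of _ "ES (subst_head c (lift 0 1 a2) a1) a2"])
      (auto simp: head_var_rename_up_0 lift_rename_up subst_head_rename intro: step_ls')
next
  case (step_lsv c a0 u)
  then obtain a1 a2 where a: "a = ES a1 a2" "a0 = rename (up f) a1" "u = rename f a2" by (metis rename_eq_ES)
  thus ?case using step_lsv by (intro exI[of _ "lsv_contr c a1 a2"])
      (auto simp: head_var_rename_up_0 lsv_contr_rename intro: step.intros)
next
  case (step_AppL c x a0 a0' b0)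
  then obtain a1 a2 where a: "a = App a1 a2" "a0 = rename f a1" "b0 = rename f a2" by (metis rename_eq_App)
  with step_AppL obtain a' where "a0' = rename f a'" "step c x a1 a'" by blast
  thus ?case using a step_AppL by (intro exI[of _ "App a' a2"]) (auto intro: step.intros)
next
  case (step_AppR c x b0 b0' a0)
  then obtain a1 a2 where a: "a = App a1 a2" "a0 = rename f a1" "b0 = rename f a2" by (metis rename_eq_App)
  with step_AppR obtain a' where "b0' = rename f a'" "step c x a2 a'" by blast
  thus ?case using a step_AppR by (intro exI[of _ "App a1 a'"]) (auto intro: step.intros)
next
  case (step_ESL c x a0 a0' b0)
  then obtain a1 a2 where a: "a = ES a1 a2" "a0 = rename (up f) a1" "b0 = rename f a2" by (metis rename_eq_ES)
  with step_ESL obtain a' where "a0' = rename (up f) a'" "step c x a1 a'" by blast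
  thus ?case using a step_ESL by (intro exI[of _ "ES a' a2"]) (auto intro: step.intros)
next
  case (step_ESR c x b0 b0' a0)
  then obtain a1 a2 where a: "a = ES a1 a2" "a0 = rename (up f) a1" "b0 = rename f a2" by (metis rename_eq_ES)
  with step_ESR obtain a' where "b0' = rename f a'" "step c x a2 a'" by blast
  thus ?case using a step_ESR by (intro exI[of _ "ES a1 a'"]) (auto simp: head_var_rename_up_0 intro: step.intros)
qed

lemma head_var_lift: "head_var c (lift n k t) = map_option (lift_idx n k) (head_var c t)"
  by (simp add: lift_eq_rename head_var_rename)

lemma head_var_swap: "head_var c (swap n t) = map_option (swap_idx n) (head_var c t)"
  by (simp add: swap_eq_rename head_var_rename)

lemma is_answer_swap[simp]: "is_answer (swap n t) = is_answer t"
  by (simp add: swap_eq_rename)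

lemma eval_left_lift: "eval_left c (lift n k a) (lift n k b) = eval_left c a b"
  by (simp add: lift_eq_rename)

lemma subst_head_lift: "subst_head c (lift n k w) (lift n k t) = lift n k (subst_head c w t)"
  by (simp add: lift_eq_rename subst_head_rename)

lemma subst_head_swap: "subst_head c (swap n w) (swap n t) = swap n (subst_head c w t)"
  by (simp add: swap_eq_rename subst_head_rename)

lemma swap_subst_head_lift_2: "swap 0 (subst_head c (lift 0 (Suc (Suc 0)) w) a) = subst_head c (lift 0 (Suc (Suc 0)) w) (swap 0 a)"
  using subst_head_swap[of c 0 "lift 0 (Suc (Suc 0)) w" a] swap_lift_2 by simp

lemma dB_contr_lift: "dB_contr (lift n k w) (lift n k a) = lift n k (dB_contr w a)"
  by (simp add: lift_eq_rename dB_contr_rename)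

lemma dB_contr_swap: "dB_contr (swap n w) (swap n a) = swap n (dB_contr w a)"
  by (simp add: swap_eq_rename dB_contr_rename)

lemma lsv_contr_lift: "lsv_contr c (lift (Suc n) k a) (lift n k u) = lift n k (lsv_contr c a u)"
  using lsv_contr_rename[of c "lift_idx n k" a u] by (simp add: lift_eq_rename up_lift_idx)

lemma lsv_contr_swap: "lsv_contr c (swap (Suc n) a) (swap n u) = swap n (lsv_contr c a u)"
  using lsv_contr_rename[of c "swap_idx n" a u] by (simp add: swap_eq_rename up_swap_idx)

lemma head_var_lift_ne_0: "head_var c (lift 0 (Suc 0) t) \<noteq> Some 0"
  by (simp add: head_var_lift lift_idx_def split: option.split)

lemma step_lift_0: "step c x a a' \<Longrightarrow> step c x (lift 0 (Suc 0) a) (lift 0 (Suc 0) a')"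
  by (simp add: lift_eq_rename step_rename)

lemma step_lift_inv: "step c x (lift n k a) b \<Longrightarrow> \<exists>a'. b = lift n k a' \<and> step c x a a'"
  by (simp add: lift_eq_rename step_rename_inv)

section \<open>Structural equivalence\<close>

lemma axioms_gc: "c \<noteq> Need \<Longrightarrow> axioms c (ES (lift 0 1 t) u) t"
  by (cases c) (auto intro: str_ax.intros[simplified])

lemma axioms_dup: "c \<noteq> Need \<Longrightarrow> rename (merge_idx 0) t' = t \<Longrightarrow> axioms c (ES t u) (ES (ES t' (lift 0 1 u)) u)"
  by (cases c) (auto intro: str_ax.intros[simplified] simp: ren_some_iff)

lemma axioms_app: "c \<noteq> Need \<Longrightarrow> axioms c (ES (App t w) u) (App (ES t u) (ES w u))"
  by (cases c) (auto intro: str_ax.intros[simplified])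

lemma axioms_appl: "axioms Need (ES (App t (lift 0 1 w)) u) (App (ES t u) w)"
  by (auto intro: need_ax.intros[simplified])

lemma axioms_com: "axioms c (ES (ES t (lift 0 1 u)) w) (ES (ES (swap 0 t) (lift 0 1 w)) u)"
  by (cases c) (auto intro: str_ax.intros[simplified] need_ax.intros[simplified])

lemma axioms_sub: "axioms c (ES (ES (lift 1 1 t) u) w) (ES t (ES u w))"
  by (cases c) (auto intro: str_ax.intros[simplified] need_ax.intros[simplified])

lemma axioms_cases[consumes 1, case_names gc dup app appl com sub]:
  assumes "axioms c a b"
  obtains (gc) t u where "c \<noteq> Need" "a = ES (lift 0 1 t) u" "b = t"
  | (dup) t t' u where "c \<noteq> Need" "rename (merge_idx 0) t' = t" "a = ES t u" "b = ES (ES t' (lift 0 1 u)) u"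
  | (app) t w u where "c \<noteq> Need" "a = ES (App t w) u" "b = App (ES t u) (ES w u)"
  | (appl) t w u where "c = Need" "a = ES (App t (lift 0 1 w)) u" "b = App (ES t u) w"
  | (com) t u w where "a = ES (ES t (lift 0 1 u)) w" "b = ES (ES (swap 0 t) (lift 0 1 w)) u"
  | (sub) t u w where "a = ES (ES (lift 1 1 t) u) w" "b = ES t (ES u w)"
proof (cases "c = Need")
  case True
  with assms have "need_ax a b" by simp
  thus ?thesis using True that by (cases rule: need_ax.cases) auto
next
  case False
  with assms have "str_ax a b" by (cases c) auto
  thus ?thesis using False that by (cases rule: str_ax.cases) (auto simp: ren_some_iff)
qed

lemma streq_refl[simp]: "streq c a a"
  by (simp add: streq_def)

lemma streq_sym: "streq c a b \<Longrightarrow> streq c b a"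
  unfolding streq_def by (rule equivclp_sym)

lemma streq_trans[trans]: "streq c a b \<Longrightarrow> streq c b d \<Longrightarrow> streq c a d"
  unfolding streq_def by (rule equivclp_trans)

lemma wclose_base: "R a b \<Longrightarrow> wclose R a b"
  unfolding wclose_def by (intro exI[of _ Hole]) auto

lemma axioms_streq: "axioms c a b \<Longrightarrow> streq c a b"
  unfolding streq_def by (rule r_into_equivclp, rule wclose_base)

lemma streq_gc: "c \<noteq> Need \<Longrightarrow> streq c (ES (lift 0 1 t) u) t"
  by (rule axioms_streq, rule axioms_gc)

lemma streq_dup: "c \<noteq> Need \<Longrightarrow> rename (merge_idx 0) t' = t \<Longrightarrow> streq c (ES t u) (ES (ES t' (lift 0 1 u)) u)"
  by (rule axioms_streq, rule axioms_dup)

lemma streq_app: "c \<noteq> Need \<Longrightarrow> streq c (ES (App t w) u) (App (ES t u) (ES w u))"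
  by (rule axioms_streq, rule axioms_app)

lemma streq_com: "streq c (ES (ES t (lift 0 1 u)) w) (ES (ES (swap 0 t) (lift 0 1 w)) u)"
  by (rule axioms_streq, rule axioms_com)

lemma streq_sub: "streq c (ES (ES (lift 1 1 t) u) w) (ES t (ES u w))"
  by (rule axioms_streq, rule axioms_sub)

lemma equivclp_map:
  assumes "\<And>x y. R x y \<Longrightarrow> R (f x) (f y)" and "equivclp R a b"
  shows "equivclp R (f a) (f b)"
  using assms(2) by (induction rule: equivclp_induct) (auto intro: equivclp_into_equivclp assms(1))

lemma streq_map: "(\<And>W. \<exists>W'. \<forall>s. f (plug W s) = plug W' s) \<Longrightarrow> streq c a b \<Longrightarrow> streq c (f a) (f b)"
  unfolding streq_def
proof (rule equivclp_map[of "wclose (axioms c)" f a b])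
  fix x y assume h: "\<And>W. \<exists>W'. \<forall>s. f (plug W s) = plug W' s" and "wclose (axioms c) x y"
  then obtain W s s' where "axioms c s s'" "x = plug W s" "y = plug W s'" unfolding wclose_def by blast
  moreover obtain W' where "\<forall>s. f (plug W s) = plug W' s" using h by blast
  ultimately show "wclose (axioms c) (f x) (f y)" unfolding wclose_def by auto
qed

lemma streq_AppL: "streq c a b \<Longrightarrow> streq c (App a w) (App b w)"
  by (rule streq_map[where f="\<lambda>x. App x w"]) (metis plug.simps(2))

lemma streq_AppR: "streq c a b \<Longrightarrow> streq c (App w a) (App w b)"
  by (rule streq_map[where f="\<lambda>x. App w x"]) (metis plug.simps(3))

lemma streq_ESL: "streq c a b \<Longrightarrow> streq c (ES a w) (ES b w)"
  by (rule streq_map[where f="\<lambda>x. ES x w"]) (metis plug.simps(4))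

lemma streq_ESR: "streq c a b \<Longrightarrow> streq c (ES w a) (ES w b)"
  by (rule streq_map[where f="\<lambda>x. ES w x"]) (metis plug.simps(5))

lemma streq_ES: "streq c a a' \<Longrightarrow> streq c b b' \<Longrightarrow> streq c (ES a b) (ES a' b')"
  by (meson streq_ESL streq_ESR streq_trans)

lemma streq_appl: "streq c (ES (App t (lift 0 1 w)) u) (App (ES t u) w)"
proof (cases "c = Need")
  case True thus ?thesis using axioms_streq axioms_appl by simp
next
  case False
  have "streq c (ES (App t (lift 0 1 w)) u) (App (ES t u) (ES (lift 0 1 w) u))" using streq_app[OF False] .
  also have "streq c \<dots> (App (ES t u) w)" by (rule streq_AppR, rule streq_gc[OF False])
  finally show ?thesis .
qed

inductive sstep :: "calculus \<Rightarrow> trm \<Rightarrow> trm \<Rightarrow> bool" for c where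
  sstep_ax: "axioms c a b \<Longrightarrow> sstep c a b"
| sstep_ax_sym: "axioms c b a \<Longrightarrow> sstep c a b"
| sstep_AppL: "sstep c a b \<Longrightarrow> sstep c (App a w) (App b w)"
| sstep_AppR: "sstep c a b \<Longrightarrow> sstep c (App w a) (App w b)"
| sstep_ESL: "sstep c a b \<Longrightarrow> sstep c (ES a w) (ES b w)"
| sstep_ESR: "sstep c a b \<Longrightarrow> sstep c (ES w a) (ES w b)"

lemma sstep_sym: "sstep c a b \<Longrightarrow> sstep c b a"
  by (induction rule: sstep.induct) (auto intro: sstep.intros)

lemma sstep_streq: "sstep c a b \<Longrightarrow> streq c a b"
  by (induction rule: sstep.induct)
     (auto intro: axioms_streq streq_sym streq_AppL streq_AppR streq_ESL streq_ESR)

lemma wclose_sstep: "wclose (axioms c) a b \<Longrightarrow> sstep c a b"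
proof -
  assume "wclose (axioms c) a b"
  then obtain W s s' where "axioms c s s'" "a = plug W s" "b = plug W s'" unfolding wclose_def by blast
  thus ?thesis by (induction W arbitrary: a b) (auto intro: sstep.intros)
qed

lemma axioms_rename:
  assumes "axioms c a b"
  shows "axioms c (rename f a) (rename f b)"
  using assms
proof (cases rule: axioms_cases)
  case (gc t u) thus ?thesis using axioms_gc[of c "rename f t" "rename f u"] by (simp add: lift_rename_up)
next
  case (dup t t' u)
  hence "rename (merge_idx 0) (rename (up (up f)) t') = rename (up f) t"
    using merge_rename_up2 by metis
  from axioms_dup[OF dup(1) this, of "rename f u"] show ?thesis using dup by (simp add: lift_rename_up)
next
  case (app t w u) thus ?thesis using axioms_app[of c "rename (up f) t" "rename (up f) w" "rename f u"] by simp
next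
  case (appl t w u) thus ?thesis
    using axioms_appl[of "rename (up f) t" "rename f w" "rename f u"] by (simp add: lift_rename_up)
next
  case (com t u w) thus ?thesis
    using axioms_com[of c "rename (up (up f)) t" "rename f u" "rename f w"]
    by (simp add: lift_rename_up swap_rename_up2)
next
  case (sub t u w) thus ?thesis
    using axioms_sub[of c "rename (up f) t" "rename (up f) u" "rename f w"] by (simp add: lift1_rename_up)
qed

lemma sstep_rename: "sstep c a b \<Longrightarrow> sstep c (rename f a) (rename f b)"
  by (induction arbitrary: f rule: sstep.induct) (auto intro: sstep.intros axioms_rename)

lemma sstep_lift: "sstep c a b \<Longrightarrow> sstep c (lift n k a) (lift n k b)"
  by (simp add: lift_eq_rename sstep_rename)

section \<open>Invariance under structural steps\<close>

lemma axioms_answer_head_var: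
  assumes "axioms c a b"
  shows "is_answer a = is_answer b \<and> head_var c a = head_var c b"
  using assms
proof (cases rule: axioms_cases)
  case (dup t t' u)
  hence "is_answer t = is_answer t'" "head_var c t = map_option (merge_idx 0) (head_var c t')"
    by (auto simp: head_var_rename)
  thus ?thesis using dup
    by (auto simp: head_var_lift lift_idx_def merge_idx_def split: option.split nat.split)
next
  case app thus ?thesis by (cases c) (auto split: option.split nat.split)
qed (auto simp: head_var_lift head_var_swap lift_idx_def swap_idx_def split: option.split nat.split if_splits)

lemma sstep_answer_head_var: "sstep c a b \<Longrightarrow> is_answer a = is_answer b \<and> head_var c a = head_var c b"
proof (induction rule: sstep.induct)
  case (sstep_ax a b) thus ?case using axioms_answer_head_var by blast
next
  case (sstep_ax_sym b a) thus ?case using axioms_answer_head_var by metis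
next
  case (sstep_AppL a b w)
  hence "is_answer a = is_answer b" "head_var c a = head_var c b" by auto
  thus ?case by (cases c) simp_all
next
  case (sstep_AppR a b w)
  hence "is_answer a = is_answer b" "head_var c a = head_var c b" by auto
  thus ?case by (cases c) simp_all
qed (auto split: option.split nat.split)

lemma sstep_answer: "sstep c a b \<Longrightarrow> is_answer a = is_answer b" and sstep_head_var: "sstep c a b \<Longrightarrow> head_var c a = head_var c b"
  using sstep_answer_head_var by blast+

lemma axioms_subst_head_com:
  assumes "head_var c (ES (ES t (lift 0 1 u)) z) \<noteq> None"
  shows "axioms c (subst_head c w (ES (ES t (lift 0 1 u)) z)) (subst_head c w (ES (ES (swap 0 t) (lift 0 1 z)) u))"
proof -
  obtain j where hj: "head_var c t = Some j" using assms by (auto split: option.splits nat.splits if_splits)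
  consider "j = 0" | "j = 1" | j' where "j = Suc (Suc j')" by (metis One_nat_def not0_implies_Suc)
  thus ?thesis
  proof cases
    case 1
    hence "head_var c (swap 0 t) = Some 1" using hj by (simp add: head_var_swap swap_idx_def)
    thus ?thesis using hj 1 assms axioms_com[of c t "subst_head c w u" z]
      by (auto simp: head_var_lift_ne_0 subst_head_lift)
  next
    case 2
    hence "head_var c (swap 0 t) = Some 0" using hj by (simp add: head_var_swap swap_idx_def)
    thus ?thesis using hj 2 assms axioms_com[of c t u "subst_head c w z"]
      by (auto simp: head_var_lift_ne_0 subst_head_lift)
  next
    case 3
    hence "head_var c (swap 0 t) = Some j" using hj by (simp add: head_var_swap swap_idx_def)
    thus ?thesis using hj 3 axioms_com[of c "subst_head c (lift 0 (Suc (Suc 0)) w) t" u z]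
      by (auto simp: lift_lift_0 swap_subst_head_lift_2)
  qed
qed

lemma axioms_subst_head_sub:
  assumes "head_var c (ES (ES (lift 1 1 t) u) z) \<noteq> None"
  shows "axioms c (subst_head c w (ES (ES (lift 1 1 t) u) z)) (subst_head c w (ES t (ES u z)))"
proof -
  obtain j where hj: "head_var c t = Some j" using assms
    by (auto simp: head_var_lift split: option.splits nat.splits if_splits)
  show ?thesis
  proof (cases j)
    case 0
    hence hl: "head_var c (lift 1 1 t) = Some 0" using hj by (simp add: head_var_lift lift_idx_def)
    then obtain k where hk: "head_var c u = Some k" using assms
      by (auto split: option.splits nat.splits if_splits)
    show ?thesis
    proof (cases k)
      case 0 thus ?thesis using hj hl hk \<open>j = 0\<close> assms axioms_sub[of c t u "subst_head c w z"]
        by (auto split: if_splits)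
    next
      case Suc thus ?thesis using hj hl hk \<open>j = 0\<close> axioms_sub[of c t "subst_head c (lift 0 1 w) u" z]
        by auto
    qed
  next
    case (Suc j')
    have "head_var c (lift 1 1 t) = Some (Suc (Suc j'))" using hj Suc by (simp add: head_var_lift lift_idx_def)
    moreover have "lift 1 1 (subst_head c (lift 0 1 w) t) = subst_head c (lift 0 (Suc (Suc 0)) w) (lift 1 1 t)"
      using subst_head_lift[of c 1 1 "lift 0 1 w" t] lift1_lift0 by simp
    ultimately show ?thesis using hj Suc axioms_sub[of c "subst_head c (lift 0 1 w) t" u z]
      by (auto simp: lift_lift_0)
  qed
qed

lemma axioms_subst_head:
  assumes "axioms c a b" and "head_var c a \<noteq> None"
  shows "axioms c (subst_head c w a) (subst_head c w b)"
  using assms(1)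
proof (cases rule: axioms_cases)
  case (gc t u) thus ?thesis
    using assms(2) axioms_gc[of c "subst_head c w t" u] by (simp add: head_var_lift_ne_0 subst_head_lift)
next
  case (dup t t' u)
  obtain j where hj: "head_var c t = Some (Suc j)" using assms(2) dup
    by (auto split: option.splits nat.splits if_splits)
  have "head_var c t' = Some (Suc (Suc j))"
    using hj dup by (auto simp: head_var_rename merge_idx_def split: if_splits)
  moreover have "rename (merge_idx 0) (subst_head c (lift 0 (Suc (Suc 0)) w) t') = subst_head c (lift 0 1 w) t"
    using dup subst_head_rename[of c "merge_idx 0" "lift 0 (Suc (Suc 0)) w" t'] rename_merge0_lift0_2 by simp
  ultimately show ?thesis using dup hj axioms_dup[OF dup(1), of "subst_head c (lift 0 (Suc (Suc 0)) w) t'"]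
    by (simp add: lift_lift_0 head_var_lift_ne_0)
next
  case (app t w0 u)
  have "head_var c (App t w0) \<noteq> Some 0" using assms(2) app by auto
  moreover have "eval_left c (ES t u) (ES w0 u) = eval_left c t w0" by (cases c) auto
  ultimately show ?thesis using app axioms_app by (auto split: if_splits)
next
  case (appl t w0 u) thus ?thesis
    using axioms_appl[of t w0 "subst_head c w u"] axioms_appl[of "subst_head c (lift 0 1 w) t" w0 u]
    by auto
next
  case com thus ?thesis using assms(2) axioms_subst_head_com by simp
next
  case sub thus ?thesis using assms(2) axioms_subst_head_sub by simp
qed

lemma sstep_subst_head: "sstep c a b \<Longrightarrow> head_var c a \<noteq> None \<Longrightarrow> sstep c (subst_head c w a) (subst_head c w b)"
proof (induction arbitrary: w rule: sstep.induct)
  case (sstep_ax a b) thus ?case using axioms_subst_head sstep.sstep_ax by blast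
next
  case (sstep_ax_sym b a)
  hence "head_var c b \<noteq> None" using axioms_answer_head_var by metis
  thus ?case using axioms_subst_head[OF sstep_ax_sym(1)] sstep.sstep_ax_sym by blast
next
  case (sstep_AppL a b w0)
  have e: "eval_left c a w0 = eval_left c b w0" using sstep_answer[OF sstep_AppL(1)] by (cases c) auto
  thus ?case using sstep_AppL by (auto intro: sstep.intros)
next
  case (sstep_AppR a b w0)
  have e: "eval_left c w0 a = eval_left c w0 b" using sstep_answer[OF sstep_AppR(1)] by (cases c) auto
  thus ?case using sstep_AppR by (auto intro: sstep.intros)
next
  case (sstep_ESL a b w0)
  have e: "head_var c a = head_var c b" using sstep_head_var[OF sstep_ESL(1)] .
  show ?case
  proof (cases "head_var c a = Some 0")
    case True thus ?thesis using e sstep_ESL(1) by (auto intro: sstep.intros)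
  next
    case False
    hence "head_var c a \<noteq> None" using sstep_ESL(3) by (auto split: option.splits nat.splits)
    thus ?thesis using False e sstep_ESL by (auto intro: sstep.intros)
  qed
next
  case (sstep_ESR a b w0)
  show ?case
  proof (cases "head_var c w0 = Some 0")
    case True
    hence "head_var c a \<noteq> None" using sstep_ESR(3) by (auto split: if_splits)
    thus ?thesis using True sstep_ESR by (auto intro: sstep.intros)
  next
    case False thus ?thesis by (auto intro: sstep.intros sstep_ESR)
  qed
qed

lemma sstep_subst_head_arg: "sstep c a b \<Longrightarrow> head_var c t \<noteq> None \<Longrightarrow> sstep c (subst_head c a t) (subst_head c b t)"
proof (induction t arbitrary: a b)
  case (ES t1 t2)
  show ?case
  proof (cases "head_var c t1 = Some 0")
    case True thus ?thesis using ES by (auto intro: sstep.intros split: if_splits)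
  next
    case False
    hence "head_var c t1 \<noteq> None" using ES.prems by (auto split: option.splits nat.splits)
    thus ?thesis using False ES.IH(1)[OF sstep_lift[OF ES.prems(1), of 0 1]] by (auto intro: sstep.intros)
  qed
qed (auto intro: sstep.intros split: if_splits)

lemma axioms_dB_contr:
  assumes "axioms c a b" and "is_answer a"
  shows "axioms c (dB_contr w a) (dB_contr w b)"
  using assms(1)
proof (cases rule: axioms_cases)
  case (gc t u) thus ?thesis using axioms_gc[of c "dB_contr w t" u] dB_contr_lift[of 0 1 w t] by simp
next
  case (dup t t' u)
  have "rename (merge_idx 0) (dB_contr (lift 0 (Suc (Suc 0)) w) t') = dB_contr (lift 0 1 w) t"
    using dup dB_contr_rename[of "merge_idx 0" "lift 0 (Suc (Suc 0)) w" t'] rename_merge0_lift0_2 by simp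
  from axioms_dup[OF dup(1) this, of u] show ?thesis using dup by (simp add: lift_lift_0)
next
  case (com t u z)
  have "swap 0 (dB_contr (lift 0 (Suc (Suc 0)) w) t) = dB_contr (lift 0 (Suc (Suc 0)) w) (swap 0 t)"
    using dB_contr_swap[of 0 "lift 0 (Suc (Suc 0)) w" t] swap_lift_2 by simp
  thus ?thesis using com axioms_com[of c "dB_contr (lift 0 (Suc (Suc 0)) w) t" u z] by (simp add: lift_lift_0)
next
  case (sub t u z)
  have "lift 1 1 (dB_contr (lift 0 1 w) t) = dB_contr (lift 0 (Suc (Suc 0)) w) (lift 1 1 t)"
    using dB_contr_lift[of 1 1 "lift 0 1 w" t] lift1_lift0 by simp
  thus ?thesis using sub axioms_sub[of c "dB_contr (lift 0 1 w) t" u z] by (simp add: lift_lift_0)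
qed (use assms(2) in auto)

lemma sstep_dB_contr: "sstep c a b \<Longrightarrow> is_answer a \<Longrightarrow> sstep c (dB_contr w a) (dB_contr w b)"
proof (induction arbitrary: w rule: sstep.induct)
  case (sstep_ax a b) thus ?case using axioms_dB_contr sstep.sstep_ax by blast
next
  case (sstep_ax_sym b a)
  hence "is_answer b" using axioms_answer_head_var by metis
  thus ?case using axioms_dB_contr[OF sstep_ax_sym(1)] sstep.sstep_ax_sym by blast
qed (auto intro: sstep.intros)

lemma sstep_dB_contr_arg: "sstep c a b \<Longrightarrow> is_answer f \<Longrightarrow> sstep c (dB_contr a f) (dB_contr b f)"
proof (induction f arbitrary: a b)
  case (ES f1 f2) thus ?case using ES.IH(1)[OF sstep_lift[OF ES.prems(1), of 0 1]] by (auto intro: sstep.intros)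
qed (auto intro: sstep.intros)

lemma axioms_lsv_contr:
  assumes "axioms c a b" and "is_answer a"
  shows "axioms c (lsv_contr c t a) (lsv_contr c t b)"
  using assms(1)
proof (cases rule: axioms_cases)
  case (gc t0 u) thus ?thesis using axioms_gc[of c "lsv_contr c t t0" u] lsv_contr_lift[of c 0 1 t t0] by simp
next
  case (dup t0 t' u)
  have "rename (merge_idx (Suc 0)) (lift 1 1 (lift 1 1 t)) = lift 1 1 t"
    by (simp add: lift_eq_rename, rule rename_cong, auto simp: lift_idx_def merge_idx_def)
  hence "rename (merge_idx 0) (lsv_contr c (lift 1 1 (lift 1 1 t)) t') = lsv_contr c (lift 1 1 t) t0"
    using dup lsv_contr_rename[of c "merge_idx 0" "lift 1 1 (lift 1 1 t)" t'] by (simp add: up_merge_idx)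
  from axioms_dup[OF dup(1) this, of u] show ?thesis using dup by simp
next
  case (com t0 u z)
  have "swap 1 (lift 1 1 (lift 1 1 t)) = lift 1 1 (lift 1 1 t)"
    by (simp add: swap_eq_rename lift_eq_rename, rule rename_cong, auto simp: swap_idx_def lift_idx_def)
  hence "swap 0 (lsv_contr c (lift 1 1 (lift 1 1 t)) t0) = lsv_contr c (lift 1 1 (lift 1 1 t)) (swap 0 t0)"
    using lsv_contr_swap[of c 0 "lift 1 1 (lift 1 1 t)" t0] by simp
  thus ?thesis using com axioms_com[of c "lsv_contr c (lift 1 1 (lift 1 1 t)) t0" u z] by simp
next
  case (sub t0 u z)
  have "lift 2 1 (lift 1 1 t) = lift 1 1 (lift 1 1 t)"
    by (simp add: lift_eq_rename, rule rename_cong, auto simp: lift_idx_def)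
  hence "lift 1 1 (lsv_contr c (lift 1 1 t) t0) = lsv_contr c (lift 1 1 (lift 1 1 t)) (lift 1 1 t0)"
    using lsv_contr_lift[of c 1 1 "lift 1 1 t" t0] by (simp add: numeral_2_eq_2)
  thus ?thesis using sub axioms_sub[of c "lsv_contr c (lift 1 1 t) t0" u z] by simp
qed (use assms(2) in auto)

lemma sstep_lsv_contr: "sstep c a b \<Longrightarrow> is_answer a \<Longrightarrow> sstep c (lsv_contr c t a) (lsv_contr c t b)"
proof (induction arbitrary: t rule: sstep.induct)
  case (sstep_ax a b) thus ?case using axioms_lsv_contr sstep.sstep_ax by blast
next
  case (sstep_ax_sym b a)
  hence "is_answer b" using axioms_answer_head_var by metis
  thus ?case using axioms_lsv_contr[OF sstep_ax_sym(1)] sstep.sstep_ax_sym by blast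
qed (auto intro: sstep.intros)

lemma sstep_lsv_contr_body: "sstep c a b \<Longrightarrow> head_var c a = Some 0 \<Longrightarrow> is_answer u \<Longrightarrow> sstep c (lsv_contr c a u) (lsv_contr c b u)"
proof (induction u arbitrary: a b)
  case (Lam s)
  have "head_var c a \<noteq> None" using Lam.prems by simp
  thus ?case using sstep_subst_head[OF Lam.prems(1)] by (auto intro: sstep.intros)
next
  case (ES u1 u2)
  have "head_var c (lift 1 1 a) = Some 0" using ES.prems by (simp add: head_var_lift lift_idx_def)
  thus ?case using ES.IH(1)[OF sstep_lift[OF ES.prems(1), of 1 1]] ES.prems(3) by (auto intro: sstep.intros)
qed (auto intro: sstep.intros)

definition simulates :: "calculus \<Rightarrow> kind \<Rightarrow> trm \<Rightarrow> trm \<Rightarrow> bool" where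
  "simulates c x t u \<longleftrightarrow> (\<forall>t'. step c x t t' \<longrightarrow> (\<exists>u'. step c x u u' \<and> streq c t' u'))"

lemma simulatesI: "(\<And>t'. step c x t t' \<Longrightarrow> \<exists>u'. step c x u u' \<and> streq c t' u') \<Longrightarrow> simulates c x t u"
  by (simp add: simulates_def)

lemma simulatesD: "simulates c x t u \<Longrightarrow> step c x t t' \<Longrightarrow> \<exists>u'. step c x u u' \<and> streq c t' u'"
  by (simp add: simulates_def)

lemma simulates_trans: "simulates c x t u \<Longrightarrow> simulates c x u w \<Longrightarrow> simulates c x t w"
  unfolding simulates_def by (meson streq_trans)

lemma eval_left_cong: "is_answer a = is_answer a' \<Longrightarrow> is_answer b = is_answer b' \<Longrightarrow> eval_left c a b = eval_left c a' b'"
  by (cases c) auto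

lemma simulates_AppL:
  assumes ab: "sstep c a b" and sim: "simulates c x a b"
  shows "simulates c x (App a w) (App b w)"
proof (rule simulatesI)
  have L: "eval_left c a w = eval_left c b w" "is_answer a = is_answer b"
    using sstep_answer[OF ab] eval_left_cong[OF sstep_answer[OF ab] refl] by auto
  fix t' assume "step c x (App a w) t'"
  thus "\<exists>u'. step c x (App b w) u' \<and> streq c t' u'"
  proof cases
    case step_dB thus ?thesis using L sstep_dB_contr[OF ab]
      by (auto intro!: exI[of _ "dB_contr w b"] step.step_dB sstep_streq)
  next
    case (step_AppL a')
    then obtain b' where "step c x b b'" "streq c a' b'" using simulatesD[OF sim] by blast
    thus ?thesis using step_AppL L by (auto intro!: exI[of _ "App b' w"] step.step_AppL streq_AppL)
  next
    case (step_AppR w')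
    thus ?thesis using L ab by (auto intro!: exI[of _ "App b w'"] step.step_AppR sstep_streq sstep.intros)
  qed
qed

lemma simulates_AppR:
  assumes ab: "sstep c a b" and sim: "simulates c x a b"
  shows "simulates c x (App w a) (App w b)"
proof (rule simulatesI)
  have L: "eval_left c w a = eval_left c w b" "is_answer a = is_answer b"
    using sstep_answer[OF ab] eval_left_cong[OF refl sstep_answer[OF ab]] by auto
  fix t' assume "step c x (App w a) t'"
  thus "\<exists>u'. step c x (App w b) u' \<and> streq c t' u'"
  proof cases
    case step_dB thus ?thesis using L sstep_dB_contr_arg[OF ab]
      by (auto intro!: exI[of _ "dB_contr b w"] step.step_dB sstep_streq)
  next
    case (step_AppL w')
    thus ?thesis using L ab by (auto intro!: exI[of _ "App w' b"] step.step_AppL sstep_streq sstep.intros)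
  next
    case (step_AppR a')
    then obtain b' where "step c x b b'" "streq c a' b'" using simulatesD[OF sim] by blast
    thus ?thesis using step_AppR L by (auto intro!: exI[of _ "App w b'"] step.step_AppR streq_AppR)
  qed
qed

lemma simulates_ESL:
  assumes ab: "sstep c a b" and sim: "simulates c x a b"
  shows "simulates c x (ES a w) (ES b w)"
proof (rule simulatesI)
  have H: "head_var c a = head_var c b" using sstep_head_var[OF ab] .
  fix t' assume "step c x (ES a w) t'"
  thus "\<exists>u'. step c x (ES b w) u' \<and> streq c t' u'"
  proof cases
    case step_ls
    hence "streq c t' (ES (subst_head c (lift 0 1 w) b) w)"
      using sstep_subst_head[OF ab] by (auto intro: sstep_streq sstep.sstep_ESL)
    thus ?thesis using step_ls H step_ls' by auto
  next
    case step_lsv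
    thus ?thesis using H sstep_lsv_contr_body[OF ab]
      by (auto intro!: exI[of _ "lsv_contr c b w"] step.step_lsv sstep_streq)
  next
    case (step_ESL a')
    then obtain b' where "step c x b b'" "streq c a' b'" using simulatesD[OF sim] by blast
    thus ?thesis using step_ESL by (auto intro!: exI[of _ "ES b' w"] step.step_ESL streq_ESL)
  next
    case (step_ESR w')
    thus ?thesis using H ab by (auto intro!: exI[of _ "ES b w'"] step.step_ESR sstep_streq sstep.intros)
  qed
qed

lemma simulates_ESR:
  assumes ab: "sstep c a b" and sim: "simulates c x a b"
  shows "simulates c x (ES w a) (ES w b)"
proof (rule simulatesI)
  fix t' assume "step c x (ES w a) t'"
  thus "\<exists>u'. step c x (ES w b) u' \<and> streq c t' u'"
  proof cases
    case step_ls
    hence "sstep c (subst_head c (lift 0 1 a) w) (subst_head c (lift 0 1 b) w)"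
      using sstep_subst_head_arg[OF sstep_lift[OF ab]] by simp
    hence "streq c t' (ES (subst_head c (lift 0 1 b) w) b)"
      using step_ls streq_ES[OF sstep_streq sstep_streq[OF ab]] by simp
    thus ?thesis using step_ls step_ls' by auto
  next
    case step_lsv
    thus ?thesis using sstep_answer[OF ab] sstep_lsv_contr[OF ab]
      by (auto intro!: exI[of _ "lsv_contr c w b"] step.step_lsv sstep_streq)
  next
    case (step_ESL w')
    thus ?thesis using ab by (auto intro!: exI[of _ "ES w' b"] step.step_ESL sstep_streq sstep.intros)
  next
    case (step_ESR a')
    then obtain b' where "step c x b b'" "streq c a' b'" using simulatesD[OF sim] by blast
    thus ?thesis using step_ESR by (auto intro!: exI[of _ "ES w b'"] step.step_ESR streq_ESR)
  qed
qed

lemma sstep_simulates: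
  assumes "\<And>t u. axioms c t u \<Longrightarrow> simulates c x t u" and "\<And>t u. axioms c u t \<Longrightarrow> simulates c x t u"
  shows "sstep c t u \<Longrightarrow> simulates c x t u"
proof (induction rule: sstep.induct)
  case (sstep_ax a b) thus ?case by (rule assms(1))
next
  case (sstep_ax_sym b a) thus ?case by (rule assms(2))
next
  case (sstep_AppL a b w) thus ?case by (rule simulates_AppL)
next
  case (sstep_AppR a b w) thus ?case by (rule simulates_AppR)
next
  case (sstep_ESL a b w) thus ?case by (rule simulates_ESL)
next
  case (sstep_ESR a b w) thus ?case by (rule simulates_ESR)
qed

lemma streq_simulates:
  assumes sim: "\<And>t u. sstep c t u \<Longrightarrow> simulates c x t u" and "streq c t u"
  shows "simulates c x t u"
proof -
  have "equivclp (wclose (axioms c)) t u" using assms(2) by (simp add: streq_def)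
  thus ?thesis
  proof (induction rule: converse_equivclp_induct)
    case base show ?case by (rule simulatesI) auto
  next
    case (step y z)
    hence "sstep c y z" using wclose_sstep sstep_sym by blast
    thus ?case using sim step.IH simulates_trans by blast
  qed
qed

section \<open>Substitution spines\<close>

text \<open>\<open>spine [a\<^sub>1, \<dots>, a\<^sub>n] X = X[a\<^sub>n]\<dots>[a\<^sub>1]\<close>: the head of the list is the outermost
  substitution.\<close>

fun spine :: "trm list \<Rightarrow> trm \<Rightarrow> trm" where
  "spine [] X = X"
| "spine (a # as) X = ES (spine as X) a"

fun rename_spine :: "(nat \<Rightarrow> nat) \<Rightarrow> trm list \<Rightarrow> trm list" where
  "rename_spine f [] = []"
| "rename_spine f (a # as) = rename f a # rename_spine (up f) as"

lemma length_rename_spine[simp]: "length (rename_spine f as) = length as"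
  by (induction as arbitrary: f) auto

lemma rename_plug_spine: "rename f (spine as X) = spine (rename_spine f as) (rename (upn (length as) f) X)"
  by (induction as arbitrary: f) (auto simp: upn_up)

lemma lift_plug_spine: "lift 0 (Suc 0) (spine as X) = spine (rename_spine (lift_idx 0 1) as) (lift (length as) 1 X)"
proof -
  have "upn (length as) (lift_idx 0 1) = lift_idx (length as) 1"
    by (rule HOL.ext, simp add: upn_eq lift_idx_def)
  thus ?thesis by (simp add: lift_eq_rename rename_plug_spine)
qed

lemma is_answer_spineE: "is_answer u \<Longrightarrow> \<exists>as s. u = spine as (Lam s)"
proof (induction u)
  case (Lam s) thus ?case by (intro exI[of _ "[]"]) auto
next
  case (ES u1 u2)
  then obtain as s where "u1 = spine as (Lam s)" by auto
  thus ?case by (intro exI[of _ "u2 # as"]) auto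
qed auto

lemma dB_contr_spine: "dB_contr w (spine as (Lam s)) = spine as (ES s (lift 0 (length as) w))"
  by (induction as arbitrary: w) (auto simp: lift_lift)

lemma lsv_contr_spine: "lsv_contr c a (spine as (Lam s)) = spine as (ES (subst_head c (lift 0 1 (Lam s)) (lift 1 (length as) a)) (Lam s))"
  by (induction as arbitrary: a) (auto simp: lift_lift)

lemma streq_spine: "streq c X Y \<Longrightarrow> streq c (spine as X) (spine as Y)"
  by (induction as) (auto intro: streq_ESL)

lemma streq_sub_spine: "streq c (ES T (spine as X)) (spine as (ES (lift 1 (length as) T) X))"
proof (induction as arbitrary: T)
  case (Cons a bs)
  have "streq c (ES T (spine (a # bs) X)) (ES (ES (lift 1 1 T) (spine bs X)) a)"
    using streq_sub[of c T "spine bs X" a] by (simp add: streq_sym)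
  also have "streq c \<dots> (ES (spine bs (ES (lift 1 (length bs) (lift 1 1 T)) X)) a)"
    by (rule streq_ESL, rule Cons.IH)
  also have "lift 1 (length bs) (lift 1 1 T) = lift 1 (length (a # bs)) T"
    using lift_lift[of 1 1 1 "length bs" T] by simp
  finally show ?case by simp
qed simp

lemma streq_appl_spine: "streq c (spine as (App X (lift 0 (length as) b))) (App (spine as X) b)"
proof (induction as arbitrary: b)
  case (Cons a bs)
  have e: "lift 0 (length (a # bs)) b = lift 0 (length bs) (lift 0 1 b)"
    using lift_lift[of 0 0 1 "length bs" b] by simp
  have "streq c (spine (a # bs) (App X (lift 0 (length (a # bs)) b))) (ES (App (spine bs X) (lift 0 1 b)) a)"
    unfolding e by (simp, rule streq_ESL, rule Cons.IH)
  also have "streq c \<dots> (App (spine (a # bs) X) b)" using streq_appl by simp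
  finally show ?case .
qed simp

lemma streq_app_spine: "c \<noteq> Need \<Longrightarrow> streq c (spine as (App P Q)) (App (spine as P) (spine as Q))"
proof (induction as)
  case (Cons a bs)
  have "streq c (spine (a # bs) (App P Q)) (ES (App (spine bs P) (spine bs Q)) a)"
    using Cons by (simp add: streq_ESL)
  also have "streq c \<dots> (App (spine (a # bs) P) (spine (a # bs) Q))" using streq_app[OF Cons.prems] by simp
  finally show ?case .
qed simp

fun lift_spine :: "nat \<Rightarrow> trm list \<Rightarrow> trm list" where
  "lift_spine k [] = []"
| "lift_spine k (a # as) = lift k 1 a # lift_spine (Suc k) as"

definition rot_idx :: "nat \<Rightarrow> nat \<Rightarrow> nat" where
  "rot_idx n i = (if i = 0 then n else if i \<le> n then i - 1 else i)"

lemma length_lift_spine[simp]: "length (lift_spine k as) = length as"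
  by (induction as arbitrary: k) auto

lemma rename_spine_swap_lift_spine: "rename_spine (swap_idx k) (lift_spine k bs) = lift_spine (Suc k) bs"
proof (induction bs arbitrary: k)
  case (Cons b bs)
  have "rename (swap_idx k) (lift k 1 b) = lift (Suc k) 1 b"
    by (simp add: lift_eq_rename, rule rename_cong, auto simp: swap_idx_def lift_idx_def)
  thus ?case using Cons by (simp add: up_swap_idx)
qed simp

lemma lift_spine_eq_rename_spine: "lift_spine k as = rename_spine (lift_idx k 1) as"
proof (induction as arbitrary: k)
  case (Cons a as) thus ?case by (simp add: lift_eq_rename up_lift_idx)
qed simp

lemma streq_com_spine: "streq c (spine as (ES Y (lift 0 (length as) u))) (ES (spine (lift_spine 0 as) (rename (rot_idx (length as)) Y)) u)"
proof (induction as arbitrary: u Y)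
  case Nil
  have "rename (rot_idx 0) Y = Y" by (rule trans[OF rename_cong rename_id(2)]) (simp add: rot_idx_def)
  thus ?case by simp
next
  case (Cons a bs)
  let ?m = "length bs"
  have e: "lift 0 (length (a # bs)) u = lift 0 ?m (lift 0 1 u)"
    using lift_lift[of 0 0 1 ?m u] by simp
  have "streq c (spine (a # bs) (ES Y (lift 0 (length (a # bs)) u)))
     (ES (ES (spine (lift_spine 0 bs) (rename (rot_idx ?m) Y)) (lift 0 1 u)) a)"
    unfolding e by (simp, rule streq_ESL, rule Cons.IH)
  also have "streq c \<dots> (ES (ES (swap 0 (spine (lift_spine 0 bs) (rename (rot_idx ?m) Y))) (lift 0 1 a)) u)"
    by (rule streq_com)
  also have "swap 0 (spine (lift_spine 0 bs) (rename (rot_idx ?m) Y)) = spine (lift_spine 1 bs) (rename (rot_idx (Suc ?m)) Y)"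
  proof -
    have "rename (swap_idx ?m) (rename (rot_idx ?m) Y) = rename (rot_idx (Suc ?m)) Y"
      by (simp, rule rename_cong, auto simp: swap_idx_def rot_idx_def)
    thus ?thesis using rename_spine_swap_lift_spine[of 0 bs] by (simp add: swap_eq_rename rename_plug_spine upn_swap_idx)
  qed
  finally show ?case by simp
qed

section \<open>Copying a substitution into a context\<close>

text \<open>\<open>rename (copy_idx k) Z' = Z\<close>: \<open>Z'\<close> is \<open>Z\<close> with an extra innermost binder, and index \<open>0\<close>
  of \<open>Z'\<close> stands for the variable with index \<open>k\<close> of \<open>Z\<close>.\<close>

definition copy_idx :: "nat \<Rightarrow> nat \<Rightarrow> nat" where
  "copy_idx k j = (if j = 0 then k else j - 1)"

definition copyable :: "calculus \<Rightarrow> ctx \<Rightarrow> bool" where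
  "copyable c W \<longleftrightarrow> (\<forall>Z Z' w. rename (copy_idx (depth W)) Z' = Z \<longrightarrow>
     streq c (ES (plug W Z) w) (ES (plug W (ES Z' (lift 0 (Suc (depth W)) w))) w))"

lemma copyable_Hole: "c \<noteq> Need \<Longrightarrow> copyable c Hole"
  unfolding copyable_def
proof (intro allI impI)
  fix Z Z' w assume "c \<noteq> Need" and "rename (copy_idx (depth Hole)) Z' = Z"
  moreover have "copy_idx 0 = merge_idx 0" by (auto simp: copy_idx_def merge_idx_def)
  ultimately show "streq c (ES (plug Hole Z) w) (ES (plug Hole (ES Z' (lift 0 (Suc (depth Hole)) w))) w)"
    using streq_dup by simp
qed

lemma copyable_CAppL:
  assumes cN: "c \<noteq> Need" and IH: "copyable c W"
  shows "copyable c (CAppL W t)"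
  unfolding copyable_def
proof (intro allI impI)
  fix Z Z' w assume h: "rename (copy_idx (depth (CAppL W t))) Z' = Z"
  have "streq c (ES (plug (CAppL W t) Z) w) (App (ES (plug W Z) w) (ES t w))"
    using streq_app[OF cN] by simp
  also have "streq c \<dots> (App (ES (plug W (ES Z' (lift 0 (Suc (depth W)) w))) w) (ES t w))"
    using IH h unfolding copyable_def by (intro streq_AppL) auto
  also have "streq c \<dots> (ES (plug (CAppL W t) (ES Z' (lift 0 (Suc (depth (CAppL W t))) w))) w)"
    using streq_app[OF cN] by (simp add: streq_sym)
  finally show "streq c (ES (plug (CAppL W t) Z) w) (ES (plug (CAppL W t) (ES Z' (lift 0 (Suc (depth (CAppL W t))) w))) w)" .
qed

lemma copyable_CAppR:
  assumes cN: "c \<noteq> Need" and IH: "copyable c W"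
  shows "copyable c (CAppR t W)"
  unfolding copyable_def
proof (intro allI impI)
  fix Z Z' w assume h: "rename (copy_idx (depth (CAppR t W))) Z' = Z"
  have "streq c (ES (plug (CAppR t W) Z) w) (App (ES t w) (ES (plug W Z) w))"
    using streq_app[OF cN] by simp
  also have "streq c \<dots> (App (ES t w) (ES (plug W (ES Z' (lift 0 (Suc (depth W)) w))) w))"
    using IH h unfolding copyable_def by (intro streq_AppR) auto
  also have "streq c \<dots> (ES (plug (CAppR t W) (ES Z' (lift 0 (Suc (depth (CAppR t W))) w))) w)"
    using streq_app[OF cN] by (simp add: streq_sym)
  finally show "streq c (ES (plug (CAppR t W) Z) w) (ES (plug (CAppR t W) (ES Z' (lift 0 (Suc (depth (CAppR t W))) w))) w)" .
qed

text \<open>Duplicate the outer substitution, commute one copy below the substitution of the context,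
  push it into the hole by induction, then commute back and merge the two copies.\<close>

lemma copyable_CESL:
  assumes cN: "c \<noteq> Need" and IH: "\<And>g. copyable c (ctx_rename g W)"
  shows "copyable c (CESL W t)"
  unfolding copyable_def
proof (intro allI impI)
  fix Z Z' w assume h: "rename (copy_idx (depth (CESL W t))) Z' = Z"
  define k where "k = depth W"
  define h1 where "h1 = (\<lambda>i::nat. swap_idx 0 (lift_idx (Suc (Suc 0)) 1 i))"
  define g1 where "g1 = (\<lambda>i::nat. merge_idx 1 (swap_idx 0 i))"
  have gh: "g1 (h1 i) = i" for i
    unfolding g1_def h1_def by (auto simp: swap_idx_def lift_idx_def merge_idx_def)
  let ?P = "plug W Z"
  let ?Wh = "ctx_rename h1 W"
  let ?Zh = "rename (upn k h1) Z"
  let ?Z2 = "rename (up (upn k h1)) Z'"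
  let ?w2 = "lift 0 (Suc (Suc 0)) w"
  let ?Q = "plug ?Wh (ES ?Z2 (lift 0 (Suc k) ?w2))"
  have sw: "swap 0 (lift (Suc (Suc 0)) 1 X) = rename h1 X" for X
    by (simp add: swap_eq_rename lift_eq_rename h1_def)
  have P2: "rename h1 ?P = plug ?Wh ?Zh" by (simp add: rename_plug k_def)
  have hZ2: "rename (copy_idx k) ?Z2 = ?Zh"
  proof -
    have "rename (copy_idx k) ?Z2 = rename (\<lambda>i. upn k h1 (copy_idx (Suc k) i)) Z'"
      by (simp, rule rename_cong, auto simp: copy_idx_def upn_eq h1_def swap_idx_def lift_idx_def up_eq)
    thus ?thesis using h[symmetric] by (simp add: k_def)
  qed
  have "streq c (ES (ES ?P t) w) (ES (ES (ES (lift (Suc (Suc 0)) 1 ?P) (lift 0 1 t)) (lift 0 1 w)) w)"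
    by (rule streq_dup[OF cN]) (simp add: up_merge_idx)
  also have "streq c \<dots> (ES (ES (ES (swap 0 (lift (Suc (Suc 0)) 1 ?P)) (lift 0 1 (lift 0 1 w))) t) w)"
    by (rule streq_ESL, rule streq_com)
  also have "\<dots> = ES (ES (ES (plug ?Wh ?Zh) ?w2) t) w"
    using sw P2 lift_lift[of 0 0 1 1 w] by simp
  also have "streq c \<dots> (ES (ES (ES ?Q ?w2) t) w)"
  proof -
    have "streq c (ES (plug ?Wh ?Zh) ?w2) (ES ?Q ?w2)"
      using IH[of h1, unfolded copyable_def depth_ctx_rename] hZ2 unfolding k_def by blast
    thus ?thesis by (rule streq_ESL[OF streq_ESL])
  qed
  also have "\<dots> = ES (ES (ES (swap 0 (swap 0 ?Q)) (lift 0 1 (lift 0 1 w))) t) w"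
    using lift_lift[of 0 0 1 1 w] by simp
  also have "streq c \<dots> (ES (ES (ES (swap 0 ?Q) (lift 0 1 t)) (lift 0 1 w)) w)"
    by (rule streq_ESL, rule streq_sym, rule streq_com)
  also have "streq c \<dots> (ES (rename (merge_idx 0) (ES (swap 0 ?Q) (lift 0 1 t))) w)"
    by (rule streq_sym, rule streq_dup[OF cN refl])
  also have "rename (merge_idx 0) (ES (swap 0 ?Q) (lift 0 1 t)) = ES (plug W (ES Z' (lift 0 (Suc (Suc k)) w))) t"
  proof -
    have 1: "rename (merge_idx 1) (swap 0 X) = rename g1 X" for X by (simp add: swap_eq_rename g1_def)
    have 2: "ctx_rename g1 ?Wh = W" using gh by simp
    have 3: "rename (up (upn k g1)) ?Z2 = Z'"
      by (simp, rule trans[OF rename_cong rename_id(2)], auto simp: upn_eq gh up_eq)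
    have 4: "rename (upn k g1) (lift 0 (Suc k) ?w2) = lift 0 (Suc (Suc k)) w"
      by (simp add: lift_eq_rename, rule rename_cong, auto simp: upn_eq g1_def lift_idx_def swap_idx_def merge_idx_def)
    show ?thesis using 1 2 3 4 by (simp add: up_merge_idx rename_plug k_def del: ctx_rename_ctx_rename)
  qed
  finally show "streq c (ES (plug (CESL W t) Z) w) (ES (plug (CESL W t) (ES Z' (lift 0 (Suc (depth (CESL W t))) w))) w)"
    by (simp add: k_def)
qed

lemma copyable_CESR:
  assumes cN: "c \<noteq> Need" and IH: "\<And>g. copyable c (ctx_rename g W)"
  shows "copyable c (CESR t W)"
  unfolding copyable_def
proof (intro allI impI)
  fix Z Z' w assume h: "rename (copy_idx (depth (CESR t W))) Z' = Z"
  define k where "k = depth W"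
  let ?A = "plug W Z"
  let ?Wl = "ctx_rename (lift_idx 1 1) W"
  let ?Zl = "rename (upn k (lift_idx 1 1)) Z"
  let ?Z2 = "rename (up (upn k (lift_idx 1 1))) Z'"
  let ?Q = "plug ?Wl (ES ?Z2 (lift 0 (Suc k) (lift 0 1 w)))"
  have A2: "lift 1 1 ?A = plug ?Wl ?Zl" by (simp add: lift_eq_rename rename_plug k_def)
  have hZ2: "rename (copy_idx k) ?Z2 = ?Zl"
  proof -
    have "rename (copy_idx k) ?Z2 = rename (\<lambda>i. upn k (lift_idx 1 1) (copy_idx k i)) Z'"
      by (simp, rule rename_cong, auto simp: copy_idx_def upn_eq lift_idx_def up_eq)
    thus ?thesis using h[symmetric] by (simp add: k_def)
  qed
  have "streq c (ES (ES t ?A) w) (ES (ES (ES (lift 1 1 t) (lift 1 1 ?A)) (lift 0 1 w)) w)"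
    by (rule streq_dup[OF cN]) (simp add: up_merge_idx)
  also have "streq c \<dots> (ES (ES t (ES (lift 1 1 ?A) (lift 0 1 w))) w)"
    by (rule streq_ESL, rule streq_sub)
  also have "streq c \<dots> (ES (ES t (ES ?Q (lift 0 1 w))) w)"
  proof -
    have "streq c (ES (plug ?Wl ?Zl) (lift 0 1 w)) (ES ?Q (lift 0 1 w))"
      using IH[of "lift_idx 1 1", unfolded copyable_def depth_ctx_rename] hZ2 unfolding k_def by blast
    thus ?thesis using A2 by (simp add: streq_ESL streq_ESR)
  qed
  also have "streq c \<dots> (ES (ES (ES (lift 1 1 t) ?Q) (lift 0 1 w)) w)"
    by (rule streq_ESL, rule streq_sym, rule streq_sub)
  also have "streq c \<dots> (ES (rename (merge_idx 0) (ES (lift 1 1 t) ?Q)) w)"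
    by (rule streq_sym, rule streq_dup[OF cN refl])
  also have "rename (merge_idx 0) (ES (lift 1 1 t) ?Q) = ES t (plug W (ES Z' (lift 0 (Suc k) w)))"
  proof -
    have 1: "ctx_rename (merge_idx 0) ?Wl = W"
      by (simp, rule trans[OF ctx_rename_cong ctx_rename_id], simp add: merge_idx_def lift_idx_def)
    have 2: "rename (up (upn k (merge_idx 0))) ?Z2 = Z'"
      by (simp, rule trans[OF rename_cong rename_id(2)], auto simp: upn_eq up_eq merge_idx_def lift_idx_def)
    have 3: "rename (upn k (merge_idx 0)) (lift 0 (Suc k) (lift 0 1 w)) = lift 0 (Suc k) w"
      by (simp add: lift_eq_rename, rule rename_cong, auto simp: upn_eq lift_idx_def merge_idx_def)
    show ?thesis using 1 2 3 by (simp add: up_merge_idx rename_plug k_def del: ctx_rename_ctx_rename)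
  qed
  finally show "streq c (ES (plug (CESR t W) Z) w) (ES (plug (CESR t W) (ES Z' (lift 0 (Suc (depth (CESR t W))) w))) w)"
    by (simp add: k_def)
qed

lemma copyable_ctx_rename: "c \<noteq> Need \<Longrightarrow> copyable c (ctx_rename f W)"
proof (induction W arbitrary: f)
  case Hole thus ?case using copyable_Hole by simp
next
  case (CAppL W t) thus ?case using copyable_CAppL by simp
next
  case (CAppR t W) thus ?case using copyable_CAppR by simp
next
  case (CESL W t) thus ?case using copyable_CESL[of c "ctx_rename (up f) W"] by simp
next
  case (CESR t W) thus ?case using copyable_CESR[of c "ctx_rename f W"] by simp
qed

lemma streq_copy:
  assumes "c \<noteq> Need" "rename (copy_idx (depth W)) Z' = Z"
  shows "streq c (ES (plug W Z) w) (ES (plug W (ES Z' (lift 0 (Suc (depth W)) w))) w)"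
  using copyable_ctx_rename[OF assms(1), of "\<lambda>i. i" W] assms(2) unfolding copyable_def by auto

fun spine_ctx :: "trm list \<Rightarrow> ctx" where
  "spine_ctx [] = Hole"
| "spine_ctx (a # as) = CESL (spine_ctx as) a"

lemma plug_spine_ctx[simp]: "plug (spine_ctx as) X = spine as X"
  by (induction as) auto

lemma depth_spine_ctx[simp]: "depth (spine_ctx as) = length as"
  by (induction as) auto

fun ctx_comp :: "ctx \<Rightarrow> ctx \<Rightarrow> ctx" where
  "ctx_comp Hole D = D"
| "ctx_comp (CAppL C t) D = CAppL (ctx_comp C D) t"
| "ctx_comp (CAppR t C) D = CAppR t (ctx_comp C D)"
| "ctx_comp (CESL C t) D = CESL (ctx_comp C D) t"
| "ctx_comp (CESR t C) D = CESR t (ctx_comp C D)"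

lemma plug_ctx_comp[simp]: "plug (ctx_comp C D) X = plug C (plug D X)"
  by (induction C) auto

lemma depth_ctx_comp[simp]: "depth (ctx_comp C D) = depth C + depth D"
  by (induction C) auto

fun copy_spine :: "nat \<Rightarrow> nat \<Rightarrow> nat \<Rightarrow> trm list \<Rightarrow> trm list" where
  "copy_spine k n i [] = []"
| "copy_spine k n i (a # as) = lift i (k + n) a # copy_spine k n (Suc i) as"

definition copy_spine_idx :: "nat \<Rightarrow> nat \<Rightarrow> nat \<Rightarrow> nat" where
  "copy_spine_idx k n j = (if j < k then j + n else if j < k + n then j - k else j + n)"

lemma length_copy_spine[simp]: "length (copy_spine k n i as) = length as"
  by (induction as arbitrary: i) auto

lemma rename_spine_copy_spine: "rename_spine (upn i (\<lambda>j. if j = m + k then 0 else Suc j)) (copy_spine k m i bs) = copy_spine k (Suc m) (Suc i) bs"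
proof (induction bs arbitrary: i)
  case (Cons b bs)
  have "rename (upn i (\<lambda>j. if j = m + k then 0 else Suc j)) (lift i (k + m) b) = lift (Suc i) (k + Suc m) b"
    by (simp add: lift_eq_rename, rule rename_cong, auto simp: upn_eq lift_idx_def)
  moreover have "up (upn i (\<lambda>j. if j = m + k then 0 else Suc j)) = upn (Suc i) (\<lambda>j. if j = m + k then 0 else Suc j)"
    by simp
  ultimately show ?case using Cons.IH[of "Suc i"] by (simp del: upn.simps)
qed simp

lemma streq_copy_spine:
  assumes cN: "c \<noteq> Need"
  shows "streq c (spine as (plug W Z)) (spine as (plug W (spine (copy_spine (depth W) (length as) 0 as) (rename (copy_spine_idx (depth W) (length as)) Z))))"
proof (induction as arbitrary: W Z)
  case Nil
  have "rename (copy_spine_idx (depth W) 0) Z = Z" by (rule rename_id_cong) (simp add: copy_spine_idx_def)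
  thus ?case by simp
next
  case (Cons a bs)
  define k where "k = depth W"
  define m where "m = length bs"
  define redir where "redir = (\<lambda>j::nat. if j = m + k then 0 else Suc j)"
  define Z2 where "Z2 = spine (copy_spine k m 0 bs) (rename (copy_spine_idx k m) Z)"
  have "streq c (spine (a # bs) (plug W Z)) (ES (spine bs (plug W Z2)) a)"
    using Cons.IH[of W Z] unfolding Z2_def k_def m_def by (simp add: streq_ESL)
  also have "\<dots> = ES (plug (ctx_comp (spine_ctx bs) W) Z2) a" by simp
  also have "streq c \<dots> (ES (plug (ctx_comp (spine_ctx bs) W) (ES (rename redir Z2) (lift 0 (Suc (depth (ctx_comp (spine_ctx bs) W))) a))) a)"
  proof (rule streq_copy[OF cN])
    show "rename (copy_idx (depth (ctx_comp (spine_ctx bs) W))) (rename redir Z2) = Z2"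
      by (simp, rule rename_id_cong, simp add: copy_idx_def redir_def m_def k_def)
  qed
  also have "ES (rename redir Z2) (lift 0 (Suc (depth (ctx_comp (spine_ctx bs) W))) a)
     = spine (copy_spine k (length (a # bs)) 0 (a # bs)) (rename (copy_spine_idx k (length (a # bs))) Z)"
  proof -
    have 1: "rename_spine redir (copy_spine k m 0 bs) = copy_spine k (Suc m) (Suc 0) bs"
      using rename_spine_copy_spine[of 0 m k bs] unfolding redir_def by simp
    have 2: "rename (upn m redir) (rename (copy_spine_idx k m) Z) = rename (copy_spine_idx k (Suc m)) Z"
      by (simp, rule rename_cong, auto simp: upn_eq copy_spine_idx_def redir_def)
    show ?thesis using 1 2 unfolding Z2_def by (simp add: rename_plug_spine m_def k_def add.commute)
  qed
  finally show ?case by (simp add: k_def)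
qed

lemma streq_copy_spine_ES:
  assumes cN: "c \<noteq> Need"
  shows "streq c (spine as (ES Y X)) (spine as (ES Y (lift 0 (length as) (spine as X))))"
proof -
  have "streq c (spine as (plug (CESR Y Hole) X)) (spine as (plug (CESR Y Hole) (spine (copy_spine 0 (length as) 0 as) (rename (copy_spine_idx 0 (length as)) X))))"
    using streq_copy_spine[OF cN, of as "CESR Y Hole" X] by simp
  moreover have "lift 0 (length as) (spine as X) = spine (copy_spine 0 (length as) 0 as) (rename (copy_spine_idx 0 (length as)) X)"
  proof -
    have r: "rename_spine (upn i (lift_idx 0 n)) bs = copy_spine 0 n i bs" for i n bs
    proof (induction bs arbitrary: i)
      case (Cons b bs)
      have "rename (upn i (lift_idx 0 n)) b = lift i n b"
        by (simp add: lift_eq_rename, rule rename_cong, auto simp: upn_eq lift_idx_def)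
      thus ?case using Cons.IH[of "Suc i"] by simp
    qed simp
    have "rename (upn (length as) (lift_idx 0 (length as))) X = rename (copy_spine_idx 0 (length as)) X"
      by (rule rename_cong, auto simp: upn_eq lift_idx_def copy_spine_idx_def)
    thus ?thesis using r[of 0 "length as" as] by (simp add: lift_eq_rename rename_plug_spine)
  qed
  ultimately show ?thesis by simp
qed

section \<open>Equivalences between contracta\<close>

lemma lsv_contr_appl:
  assumes "head_var Need a = Some 0" "is_answer w"
  shows "streq Need (lsv_contr Need (App a (lift 0 1 b)) w) (App (lsv_contr Need a w) b)"
proof -
  obtain as s where w: "w = spine as (Lam s)" using is_answer_spineE assms(2) by blast
  define n where "n = length as"
  have e: "lift 1 n (lift 0 1 b) = lift 0 1 (lift 0 n b)"
    using lift_lift[of 0 0 1 n b] lift_lift[of 0 0 n 1 b] lift_lift[of 0 1 1 n b] by simp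
  have "lsv_contr Need (App a (lift 0 1 b)) w = spine as (ES (App (subst_head Need (lift 0 1 (Lam s)) (lift 1 n a)) (lift 0 1 (lift 0 n b))) (Lam s))"
    using w e by (simp add: lsv_contr_spine n_def)
  also have "streq Need \<dots> (spine as (App (ES (subst_head Need (lift 0 1 (Lam s)) (lift 1 n a)) (Lam s)) (lift 0 n b)))"
    by (rule streq_spine, rule streq_appl)
  also have "streq Need \<dots> (App (spine as (ES (subst_head Need (lift 0 1 (Lam s)) (lift 1 n a)) (Lam s))) b)"
    unfolding n_def by (rule streq_appl_spine)
  also have "\<dots> = App (lsv_contr Need a w) b" using w by (simp add: lsv_contr_spine n_def)
  finally show ?thesis .
qed

lemma lsv_contr_app:
  assumes cN: "c \<noteq> Need" and "is_answer w"
  shows "streq c (lsv_contr c (App a b) w) (if eval_left c a b then App (lsv_contr c a w) (ES b w) else App (ES a w) (lsv_contr c b w))"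
proof -
  obtain as s where w: "w = spine as (Lam s)" using is_answer_spineE assms(2) by blast
  define n where "n = length as"
  define v1 where "v1 = lift 0 1 (Lam s)"
  have sb: "streq c (spine as (ES (lift 1 n X) (Lam s))) (ES X w)" for X
    using streq_sub_spine[of c X as "Lam s"] w by (simp add: streq_sym n_def)
  show ?thesis
  proof (cases "eval_left c a b")
    case True
    have "lsv_contr c (App a b) w = spine as (ES (App (subst_head c v1 (lift 1 n a)) (lift 1 n b)) (Lam s))"
      using w True by (simp add: lsv_contr_spine n_def v1_def eval_left_lift)
    also have "streq c \<dots> (spine as (App (ES (subst_head c v1 (lift 1 n a)) (Lam s)) (ES (lift 1 n b) (Lam s))))"
      by (rule streq_spine, rule streq_app[OF cN])
    also have "streq c \<dots> (App (spine as (ES (subst_head c v1 (lift 1 n a)) (Lam s))) (spine as (ES (lift 1 n b) (Lam s))))"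
      by (rule streq_app_spine[OF cN])
    also have "streq c \<dots> (App (lsv_contr c a w) (ES b w))"
      using w sb by (simp add: lsv_contr_spine n_def v1_def streq_AppR)
    finally show ?thesis using True by simp
  next
    case False
    have "lsv_contr c (App a b) w = spine as (ES (App (lift 1 n a) (subst_head c v1 (lift 1 n b))) (Lam s))"
      using w False by (simp add: lsv_contr_spine n_def v1_def eval_left_lift)
    also have "streq c \<dots> (spine as (App (ES (lift 1 n a) (Lam s)) (ES (subst_head c v1 (lift 1 n b)) (Lam s))))"
      by (rule streq_spine, rule streq_app[OF cN])
    also have "streq c \<dots> (App (spine as (ES (lift 1 n a) (Lam s))) (spine as (ES (subst_head c v1 (lift 1 n b)) (Lam s))))"
      by (rule streq_app_spine[OF cN])
    also have "streq c \<dots> (App (ES a w) (lsv_contr c b w))"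
      using w sb by (simp add: lsv_contr_spine n_def v1_def streq_AppL)
    finally show ?thesis using False by simp
  qed
qed

lemma dB_contr_app:
  assumes cN: "c \<noteq> Need" and "is_answer a"
  shows "streq c (ES (dB_contr b a) w) (dB_contr (ES b w) (ES a w))"
proof -
  obtain as s where a: "a = spine as (Lam s)" using is_answer_spineE assms(2) by blast
  define n where "n = length as"
  define W where "W = ctx_comp (spine_ctx as) (CESR s Hole)"
  have dW: "depth W = n" by (simp add: W_def n_def)
  have "ES (dB_contr b a) w = ES (plug W (lift 0 n b)) w" using a by (simp add: dB_contr_spine W_def n_def)
  also have "streq c \<dots> (ES (plug W (ES (lift 1 (Suc n) b) (lift 0 (Suc (depth W)) w))) w)"
  proof (rule streq_copy[OF cN])
    show "rename (copy_idx (depth W)) (lift 1 (Suc n) b) = lift 0 n b"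
      by (simp add: dW lift_eq_rename, rule rename_cong, simp add: copy_idx_def lift_idx_def)
  qed
  also have "\<dots> = dB_contr (ES b w) (ES a w)"
  proof -
    have "lift 0 n (lift 0 (Suc 0) (ES b w)) = ES (lift 1 (Suc n) b) (lift 0 (Suc n) w)"
      by (simp add: lift_eq_rename, intro conjI; rule rename_cong; simp add: lift_idx_def up_eq)
    thus ?thesis using a by (simp add: dB_contr_spine W_def n_def dW)
  qed
  finally show ?thesis .
qed

lemma lsv_contr_com:
  assumes "head_var c a = Some 1" "is_answer w"
  shows "streq c (lsv_contr c (ES a (lift 0 1 u1)) w) (ES (lsv_contr c (swap 0 a) (lift 0 1 w)) u1)"
proof -
  obtain as s where w: "w = spine as (Lam s)" using is_answer_spineE assms(2) by blast
  define n where "n = length as"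
  define v where "v = Lam s"
  define H where "H = subst_head c (lift 0 1 (lift 0 1 v)) (lift (Suc (Suc 0)) n a)"
  have hv2: "head_var c (lift (Suc (Suc 0)) n a) \<noteq> Some 0" using assms(1) by (simp add: head_var_lift lift_idx_def)
  have e1: "lift 1 n (lift 0 1 u1) = lift 0 1 (lift 0 n u1)"
    by (simp add: lift_eq_rename, rule rename_cong, simp add: lift_idx_def)
  have "lsv_contr c (ES a (lift 0 1 u1)) w = spine as (ES (ES H (lift 0 1 (lift 0 n u1))) v)"
    using w hv2 e1 by (simp add: lsv_contr_spine n_def v_def H_def)
  also have "streq c \<dots> (spine as (ES (ES (swap 0 H) (lift 0 1 v)) (lift 0 n u1)))"
    by (rule streq_spine, rule streq_com)
  also have "streq c \<dots> (ES (spine (lift_spine 0 as) (rename (rot_idx n) (ES (swap 0 H) (lift 0 1 v)))) u1)"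
    unfolding n_def by (rule streq_com_spine)
  also have "\<dots> = ES (lsv_contr c (swap 0 a) (lift 0 1 w)) u1"
  proof -
    have r1: "rename (rot_idx n) (lift 0 1 v) = lift n 1 v"
      by (simp add: lift_eq_rename, rule rename_cong, simp add: rot_idx_def lift_idx_def)
    have r2: "rename (up (rot_idx n)) (swap 0 H) = subst_head c (lift 0 1 (lift n 1 v)) (lift 1 n (swap 0 a))"
    proof -
      have "rename (up (rot_idx n)) (swap 0 H) = subst_head c (rename (\<lambda>i. up (rot_idx n) (swap_idx 0 i)) (lift 0 1 (lift 0 1 v)))
              (rename (\<lambda>i. up (rot_idx n) (swap_idx 0 i)) (lift (Suc (Suc 0)) n a))"
        by (simp add: H_def swap_eq_rename subst_head_rename[symmetric])
      moreover have "rename (\<lambda>i. up (rot_idx n) (swap_idx 0 i)) (lift 0 1 (lift 0 1 v)) = lift 0 1 (lift n 1 v)"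
        by (simp add: lift_eq_rename, rule rename_cong, simp add: rot_idx_def lift_idx_def swap_idx_def)
      moreover have "rename (\<lambda>i. up (rot_idx n) (swap_idx 0 i)) (lift (Suc (Suc 0)) n a) = lift 1 n (swap 0 a)"
        by (simp add: lift_eq_rename swap_eq_rename, rule rename_cong, auto simp: rot_idx_def lift_idx_def swap_idx_def up_eq)
      ultimately show ?thesis by simp
    qed
    have "lift 0 1 w = spine (lift_spine 0 as) (lift n 1 v)"
      using lift_plug_spine[of as "Lam s"] w by (simp add: lift_spine_eq_rename_spine n_def v_def)
    thus ?thesis using r1 r2 by (simp add: lsv_contr_spine n_def v_def)
  qed
  finally show ?thesis .
qed

lemma lsv_contr_dup_kept:
  assumes cN: "c \<noteq> Need" and h2: "head_var c a2 = Some 0" and Lw: "is_answer w" and aa: "a = rename (merge_idx 0) a2"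
  shows "streq c (lsv_contr c a w) (ES (lsv_contr c a2 (lift 0 1 w)) w)"
proof -
  obtain as s where w: "w = spine as (Lam s)" using is_answer_spineE Lw by blast
  define n where "n = length as"
  define v where "v = Lam s"
  define as1 where "as1 = rename_spine (lift_idx 0 1) as"
  define v' where "v' = lift n 1 v"
  define H2 where "H2 = subst_head c (lift 0 1 v') (lift 1 n a2)"
  define R where "R = (\<lambda>j::nat. if j = n then 0 else Suc j)"
  define R' where "R' = (\<lambda>j::nat. if j = n then 0 else if j < n then Suc j else j)"
  define Z where "Z = ES H2 v'"
  define Z3 where "Z3 = rename R' Z"
  have lw: "lift 0 1 w = spine as1 v'" using lift_plug_spine[of as "Lam s"] w by (simp add: as1_def v'_def v_def n_def)
  have la1: "length as1 = n" by (simp add: as1_def n_def)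
  have u': "ES (lsv_contr c a2 (lift 0 1 w)) w = ES (plug (spine_ctx as1) Z) w"
    using lw la1 by (simp add: v'_def v_def lsv_contr_spine Z_def H2_def)
  also have "streq c \<dots> (ES (plug (spine_ctx as1) (ES (rename R Z) (lift 0 (Suc (depth (spine_ctx as1))) w))) w)"
  proof (rule streq_copy[OF cN])
    show "rename (copy_idx (depth (spine_ctx as1))) (rename R Z) = Z"
      by (simp add: la1, rule rename_id_cong, simp add: copy_idx_def R_def)
  qed
  also have "\<dots> = ES (lift 0 1 (spine as (ES Z3 (lift 0 n w)))) w"
  proof -
    have "lift (Suc n) 1 Z3 = rename R Z"
      by (simp add: Z3_def lift_eq_rename, rule rename_cong, simp add: R_def R'_def lift_idx_def)
    moreover have "lift n 1 (lift 0 n w) = lift 0 (Suc n) w"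
      by (simp add: lift_eq_rename, rule rename_cong, simp add: lift_idx_def)
    ultimately show ?thesis using lift_plug_spine[of as "ES Z3 (lift 0 n w)"] la1
      by (simp add: as1_def n_def)
  qed
  also have "streq c \<dots> (spine as (ES Z3 (lift 0 n w)))" by (rule streq_gc[OF cN])
  also have "streq c \<dots> (spine as (ES Z3 v))"
    using streq_copy_spine_ES[OF cN, of as Z3 v] w by (simp add: n_def v_def streq_sym)
  also have "spine as (ES Z3 v) = spine as (ES (ES (rename (up R') H2) (lift 0 1 v)) v)"
  proof -
    have "rename R' v' = lift 0 1 v"
      by (simp add: v'_def lift_eq_rename, rule rename_cong, simp add: R'_def lift_idx_def)
    thus ?thesis by (simp add: Z3_def Z_def)
  qed
  also have "streq c \<dots> (spine as (ES (rename (merge_idx 0) (rename (up R') H2)) v))"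
    by (rule streq_spine, rule streq_sym, rule streq_dup[OF cN refl])
  also have "rename (merge_idx 0) (rename (up R') H2) = subst_head c (lift 0 1 v) (lift 1 n a)"
  proof -
    have "rename (merge_idx 0) (rename (up R') H2) = subst_head c (rename (\<lambda>i. merge_idx 0 (up R' i)) (lift 0 1 v')) (rename (\<lambda>i. merge_idx 0 (up R' i)) (lift 1 n a2))"
      by (simp add: H2_def subst_head_rename[symmetric])
    moreover have "rename (\<lambda>i. merge_idx 0 (up R' i)) (lift 0 1 v') = lift 0 1 v"
      by (simp add: v'_def lift_eq_rename, rule rename_cong, simp add: R'_def lift_idx_def merge_idx_def)
    moreover have "rename (\<lambda>i. merge_idx 0 (up R' i)) (lift 1 n a2) = lift 1 n a"
      by (simp add: aa lift_eq_rename, rule rename_cong, auto simp: R'_def lift_idx_def merge_idx_def up_eq)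
    ultimately show ?thesis by simp
  qed
  also have "spine as (ES (subst_head c (lift 0 1 v) (lift 1 n a)) v) = lsv_contr c a w"
    using w by (simp add: lsv_contr_spine n_def v_def)
  finally show ?thesis by (rule streq_sym)
qed

lemma lsv_contr_dup_renamed:
  assumes cN: "c \<noteq> Need" and h2: "head_var c a2 = Some 1" and Lw: "is_answer w" and aa: "a = rename (merge_idx 0) a2"
  shows "streq c (lsv_contr c a w) (lsv_contr c (ES a2 (lift 0 1 w)) w)"
proof -
  obtain as s where w: "w = spine as (Lam s)" using is_answer_spineE Lw by blast
  define n where "n = length as"
  define v where "v = Lam s"
  define H where "H = subst_head c (lift 0 1 (lift 0 1 v)) (lift (Suc (Suc 0)) n a2)"
  have hv2: "head_var c (lift (Suc (Suc 0)) n a2) \<noteq> Some 0" using h2 by (simp add: head_var_lift lift_idx_def)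
  have e1: "lift 1 n (lift 0 1 w) = lift 0 1 (lift 0 n w)"
    by (simp add: lift_eq_rename, rule rename_cong, simp add: lift_idx_def)
  have "lsv_contr c (ES a2 (lift 0 1 w)) w = spine as (ES (ES H (lift 0 1 (lift 0 n w))) v)"
    using w hv2 e1 by (simp add: lsv_contr_spine n_def v_def H_def)
  also have "streq c \<dots> (spine as (ES (ES (swap 0 H) (lift 0 1 v)) (lift 0 n w)))"
    by (rule streq_spine, rule streq_com)
  also have "streq c \<dots> (spine as (ES (ES (swap 0 H) (lift 0 1 v)) v))"
    using streq_copy_spine_ES[OF cN, of as "ES (swap 0 H) (lift 0 1 v)" v] w by (simp add: n_def v_def streq_sym)
  also have "streq c \<dots> (spine as (ES (rename (merge_idx 0) (swap 0 H)) v))"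
    by (rule streq_spine, rule streq_sym, rule streq_dup[OF cN refl])
  also have "rename (merge_idx 0) (swap 0 H) = subst_head c (lift 0 1 v) (lift 1 n a)"
  proof -
    have "rename (merge_idx 0) (swap 0 H) = subst_head c (rename (\<lambda>i. merge_idx 0 (swap_idx 0 i)) (lift 0 1 (lift 0 1 v))) (rename (\<lambda>i. merge_idx 0 (swap_idx 0 i)) (lift (Suc (Suc 0)) n a2))"
      by (simp add: H_def swap_eq_rename subst_head_rename[symmetric])
    moreover have "rename (\<lambda>i. merge_idx 0 (swap_idx 0 i)) (lift 0 1 (lift 0 1 v)) = lift 0 1 v"
      by (simp add: lift_eq_rename, rule rename_cong, simp add: swap_idx_def lift_idx_def merge_idx_def)
    moreover have "rename (\<lambda>i. merge_idx 0 (swap_idx 0 i)) (lift (Suc (Suc 0)) n a2) = lift 1 n a"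
      by (simp add: aa lift_eq_rename, rule rename_cong, auto simp: swap_idx_def lift_idx_def merge_idx_def)
    ultimately show ?thesis by simp
  qed
  also have "spine as (ES (subst_head c (lift 0 1 v) (lift 1 n a)) v) = lsv_contr c a w"
    using w by (simp add: lsv_contr_spine n_def v_def)
  finally show ?thesis by (rule streq_sym)
qed

lemma lsv_contr_sub:
  assumes "head_var Need a = Some 0" "is_answer w"
  shows "streq Need (lsv_contr Need (ES (lift 1 1 a) u1) w) (ES a (lsv_contr Need u1 w))"
proof -
  obtain as s where w: "w = spine as (Lam s)" using is_answer_spineE assms(2) by blast
  define n where "n = length as"
  define v where "v = Lam s"
  define U where "U = subst_head Need (lift 0 1 v) (lift 1 n u1)"
  have hv2: "head_var Need (lift (Suc (Suc 0)) n (lift 1 1 a)) = Some 0" using assms(1) by (simp add: head_var_lift lift_idx_def)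
  have e: "lift (Suc (Suc 0)) n (lift 1 1 a) = lift 1 1 (lift 1 n a)"
    by (simp add: lift_eq_rename, rule rename_cong, simp add: lift_idx_def)
  have "lsv_contr Need (ES (lift 1 1 a) u1) w = spine as (ES (ES (lift 1 1 (lift 1 n a)) U) v)"
    using w hv2 e by (simp add: lsv_contr_spine n_def v_def U_def)
  also have "streq Need \<dots> (spine as (ES (lift 1 n a) (ES U v)))"
    by (rule streq_spine, rule streq_sub)
  also have "streq Need \<dots> (ES a (spine as (ES U v)))"
    using streq_sub_spine[of Need a as "ES U v"] by (simp add: n_def streq_sym)
  also have "spine as (ES U v) = lsv_contr Need u1 w" using w by (simp add: lsv_contr_spine n_def v_def U_def)
  finally show ?thesis .
qed

lemma subst_head_sub:
  assumes "head_var Name a = Some 0"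
  shows "streq Name (ES (ES (subst_head Name (lift 0 1 u1) (lift 1 1 a)) u1) w) (ES (subst_head Name (lift 0 1 (ES u1 w)) a) (ES u1 w))"
proof -
  have "head_var Name (lift 1 1 a) = Some 0" using assms by (simp add: head_var_lift lift_idx_def)
  then obtain C where C: "is_H C" "lift 1 1 a = plug C (Var (depth C + 0))" using head_varE[of Name] by fastforce
  define d where "d = depth C"
  have hr: "subst_head Name X (lift 1 1 a) = plug C (lift 0 d X)" for X
    using head_var_plug_H[OF C(1), of 0 X] C(2) by (simp add: d_def)
  have "ES (ES (subst_head Name (lift 0 1 u1) (lift 1 1 a)) u1) w = ES (plug (CESL C u1) (lift 0 (Suc d) u1)) w"
    using hr lift_lift[of 0 0 1 d u1] by simp
  also have "streq Name \<dots> (ES (plug (CESL C u1) (ES (lift 1 (Suc (Suc d)) u1) (lift 0 (Suc (depth (CESL C u1))) w))) w)"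
  proof (rule streq_copy)
    show "rename (copy_idx (depth (CESL C u1))) (lift 1 (Suc (Suc d)) u1) = lift 0 (Suc d) u1"
      by (simp add: d_def lift_eq_rename, rule rename_cong, simp add: copy_idx_def lift_idx_def)
  qed simp
  also have "\<dots> = ES (ES (lift 1 1 (subst_head Name (lift 0 1 (ES u1 w)) a)) u1) w"
  proof -
    have "lift 1 1 (subst_head Name (lift 0 1 (ES u1 w)) a) = plug C (lift 0 d (lift 1 1 (lift 0 1 (ES u1 w))))"
      using subst_head_lift[of Name 1 1 "lift 0 1 (ES u1 w)" a] hr by simp
    moreover have "lift 0 d (lift 1 1 (lift 0 1 (ES u1 w))) = ES (lift 1 (Suc (Suc d)) u1) (lift 0 (Suc (Suc d)) w)"
      by (simp add: lift_eq_rename, intro conjI; rule rename_cong; simp add: lift_idx_def up_eq)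
    ultimately show ?thesis by (simp add: d_def)
  qed
  also have "streq Name \<dots> (ES (subst_head Name (lift 0 1 (ES u1 w)) a) (ES u1 w))" by (rule streq_sub)
  finally show ?thesis .
qed

section \<open>Simulation of the axioms\<close>

lemma gc_simulation:
  assumes cN: "c \<noteq> Need" and r: "step c x (ES (lift 0 1 a) w) t'"
  shows "\<exists>u'. step c x a u' \<and> streq c t' u'"
  using r
proof cases
  case step_ls thus ?thesis using head_var_lift_ne_0 by simp
next
  case step_lsv thus ?thesis using head_var_lift_ne_0 by simp
next
  case (step_ESL a0)
  then obtain a' where "a0 = lift 0 1 a'" "step c x a a'" using step_lift_inv by blast
  thus ?thesis using step_ESL streq_gc[OF cN] by auto
next
  case step_ESR thus ?thesis using cN by simp
qed

lemma gc_simulation_rev: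
  assumes cN: "c \<noteq> Need" and r: "step c x a t'"
  shows "\<exists>u'. step c x (ES (lift 0 1 a) w) u' \<and> streq c t' u'"
proof -
  have "step c x (ES (lift 0 1 a) w) (ES (lift 0 1 t') w)" using step_lift_0[OF r] by (simp add: step.step_ESL)
  thus ?thesis using streq_gc[OF cN, of t' w] streq_sym by blast
qed

lemma head_var_merge_0: "rename (merge_idx 0) a2 = a \<Longrightarrow> (head_var c a = Some 0 \<longleftrightarrow> head_var c a2 = Some 0 \<or> head_var c a2 = Some 1)"
  by (auto simp: head_var_rename merge_idx_def split: if_splits)

lemma merge_subst_head: "rename (merge_idx 0) a2 = a \<Longrightarrow>
   rename (merge_idx 0) (subst_head c (lift 0 (Suc 0) (lift 0 (Suc 0) w)) a2) = subst_head c (lift 0 (Suc 0) w) a"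
  using subst_head_rename[of c "merge_idx 0" "lift 0 (Suc 0) (lift 0 (Suc 0) w)" a2] rename_merge0_lift0_2 lift_lift_0 by simp

lemma dup_simulation:
  assumes cN: "c \<noteq> Need" and aa: "rename (merge_idx 0) a2 = a" and r: "step c x (ES a w) t'"
  shows "\<exists>u'. step c x (ES (ES a2 (lift 0 1 w)) w) u' \<and> streq c t' u'"
  using r
proof cases
  case step_ls
  hence j: "head_var c a2 = Some 0 \<or> head_var c a2 = Some 1" using head_var_merge_0[OF aa] by simp
  define u' where "u' = ES (ES (subst_head c (lift 0 (Suc 0) (lift 0 (Suc 0) w)) a2) (lift 0 1 w)) w"
  have st: "streq c t' u'" using step_ls streq_dup[OF cN merge_subst_head[OF aa]] by (simp add: u'_def)
  have "step c x (ES (ES a2 (lift 0 1 w)) w) u'"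
  proof (cases "head_var c a2 = Some 0")
    case True
    thus ?thesis using step_ls step_ls'[of c a2 "lift 0 1 w"] by (auto simp: u'_def intro: step.step_ESL)
  next
    case False
    hence "head_var c a2 = Some 1" using j by simp
    hence "head_var c (ES a2 (lift 0 1 w)) = Some 0" by simp
    thus ?thesis using step_ls False step_ls'[of c "ES a2 (lift 0 1 w)" w] by (auto simp: u'_def)
  qed
  thus ?thesis using st by blast
next
  case step_lsv
  hence j: "head_var c a2 = Some 0 \<or> head_var c a2 = Some 1" using head_var_merge_0[OF aa] by simp
  show ?thesis
  proof (cases "head_var c a2 = Some 0")
    case True
    have "step c x (ES (ES a2 (lift 0 1 w)) w) (ES (lsv_contr c a2 (lift 0 1 w)) w)"
      using step_lsv True by (auto intro!: step.step_ESL step.step_lsv)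
    thus ?thesis using lsv_contr_dup_kept[OF cN True _ aa[symmetric]] step_lsv by auto
  next
    case False
    hence h1: "head_var c a2 = Some 1" using j by simp
    hence "head_var c (ES a2 (lift 0 1 w)) = Some 0" by simp
    hence "step c x (ES (ES a2 (lift 0 1 w)) w) (lsv_contr c (ES a2 (lift 0 1 w)) w)"
      using step_lsv by (auto intro!: step.step_lsv)
    thus ?thesis using lsv_contr_dup_renamed[OF cN h1 _ aa[symmetric]] step_lsv by auto
  qed
next
  case (step_ESL a')
  then obtain a2' where "a' = rename (merge_idx 0) a2'" "step c x a2 a2'" using step_rename_inv aa by blast
  hence "step c x (ES (ES a2 (lift 0 1 w)) w) (ES (ES a2' (lift 0 1 w)) w)" by (auto intro: step.step_ESL)
  thus ?thesis using step_ESL streq_dup[OF cN] \<open>a' = rename (merge_idx 0) a2'\<close> by auto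
next
  case step_ESR thus ?thesis using cN by simp
qed

lemma dup_simulation_rev:
  assumes cN: "c \<noteq> Need" and aa: "rename (merge_idx 0) a2 = a" and r: "step c x (ES (ES a2 (lift 0 1 w)) w) t'"
  shows "\<exists>u'. step c x (ES a w) u' \<and> streq c t' u'"
  using r
proof cases
  case step_ls
  hence h1: "head_var c a2 = Some 1" by (auto simp: head_var_lift_ne_0 split: option.splits nat.splits if_splits)
  hence ha: "head_var c a = Some 0" using head_var_merge_0[OF aa] by simp
  have "t' = ES (ES (subst_head c (lift 0 (Suc 0) (lift 0 (Suc 0) w)) a2) (lift 0 1 w)) w"
    using step_ls h1 by simp
  hence "streq c t' (ES (subst_head c (lift 0 (Suc 0) w) a) w)"
    using streq_dup[OF cN merge_subst_head[OF aa]] streq_sym by metis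
  thus ?thesis using step_ls' ha step_ls by blast
next
  case step_lsv
  hence h1: "head_var c a2 = Some 1" by (auto simp: head_var_lift_ne_0 split: option.splits nat.splits if_splits)
  hence ha: "head_var c a = Some 0" using head_var_merge_0[OF aa] by simp
  have "step c x (ES a w) (lsv_contr c a w)" using step_lsv ha by (auto intro: step.step_lsv)
  thus ?thesis using lsv_contr_dup_renamed[OF cN h1 _ aa[symmetric]] step_lsv streq_sym by blast
next
  case (step_ESL t0)
  from step_ESL(2) show ?thesis
  proof cases
    case step_ls
    hence ha: "head_var c a = Some 0" using head_var_merge_0[OF aa] by simp
    have "t' = ES (ES (subst_head c (lift 0 (Suc 0) (lift 0 (Suc 0) w)) a2) (lift 0 1 w)) w"
      using step_ls step_ESL by simp
    hence "streq c t' (ES (subst_head c (lift 0 (Suc 0) w) a) w)"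
      using streq_dup[OF cN merge_subst_head[OF aa]] streq_sym by metis
    thus ?thesis using step_ls' ha step_ls by blast
  next
    case step_lsv
    hence ha: "head_var c a = Some 0" and Lw: "is_answer w" using head_var_merge_0[OF aa] by auto
    have "step c x (ES a w) (lsv_contr c a w)" using step_lsv ha Lw by (auto intro: step.step_lsv)
    thus ?thesis using lsv_contr_dup_kept[OF cN _ Lw aa[symmetric]] step_lsv step_ESL streq_sym by metis
  next
    case (step_ESL a2')
    hence "step c x (ES a w) (ES (rename (merge_idx 0) a2') w)" using step_rename aa by (metis step.step_ESL)
    moreover have "streq c (ES (ES a2' (lift 0 1 w)) w) (ES (rename (merge_idx 0) a2') w)"
      using streq_dup[OF cN refl] streq_sym by blast
    ultimately show ?thesis using step_ESL \<open>t' = ES t0 w\<close> by auto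
  next
    case step_ESR thus ?thesis using cN by simp
  qed
next
  case step_ESR thus ?thesis using cN by simp
qed

lemma eval_left_ES: "eval_left c (ES a w) (ES b w') = eval_left c a b"
  by (cases c) auto

lemma app_simulation:
  assumes cN: "c \<noteq> Need" and r: "step c x (ES (App a b) w) t'"
  shows "\<exists>u'. step c x (App (ES a w) (ES b w)) u' \<and> streq c t' u'"
  using r
proof cases
  case step_ls
  hence ha: "head_var c a = Some 0" by simp
  have "step c x (App (ES a w) (ES b w)) (App (ES (subst_head c (lift 0 (Suc 0) w) a) w) (ES b w))"
    using step_ls ha by (auto intro!: step.step_AppL step_ls')
  moreover have "streq c t' (App (ES (subst_head c (lift 0 (Suc 0) w) a) w) (ES b w))"
    using step_ls streq_app[OF cN] by simp
  ultimately show ?thesis by blast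
next
  case step_lsv
  have st: "streq c t' (if eval_left c a b then App (lsv_contr c a w) (ES b w) else App (ES a w) (lsv_contr c b w))"
    using lsv_contr_app[OF cN, of w a b] step_lsv by simp
  show ?thesis
  proof (cases "eval_left c a b")
    case True
    hence "step c x (App (ES a w) (ES b w)) (App (lsv_contr c a w) (ES b w))"
      using step_lsv by (auto intro!: step.step_AppL step.step_lsv simp: eval_left_ES)
    thus ?thesis using st True by auto
  next
    case False
    hence "step c x (App (ES a w) (ES b w)) (App (ES a w) (lsv_contr c b w))"
      using step_lsv by (auto intro!: step.step_AppR step.step_lsv simp: eval_left_ES)
    thus ?thesis using st False by auto
  qed
next
  case (step_ESL t0)
  from step_ESL(2) show ?thesis
  proof cases
    case step_dB
    have "step c M (App (ES a w) (ES b w)) (dB_contr (ES b w) (ES a w))" by (rule step.step_dB) (use step_dB in auto)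
    hence "step c x (App (ES a w) (ES b w)) (dB_contr (ES b w) (ES a w))" using step_dB by simp
    thus ?thesis using dB_contr_app[OF cN, of a b w] step_ESL step_dB by auto
  next
    case (step_AppL a')
    hence "step c x (App (ES a w) (ES b w)) (App (ES a' w) (ES b w))"
      by (auto intro!: step.step_AppL step.step_ESL simp: eval_left_ES)
    thus ?thesis using step_ESL step_AppL streq_app[OF cN] by auto
  next
    case (step_AppR b')
    hence "step c x (App (ES a w) (ES b w)) (App (ES a w) (ES b' w))"
      by (auto intro!: step.step_AppR step.step_ESL simp: eval_left_ES)
    thus ?thesis using step_ESL step_AppR streq_app[OF cN] by auto
  qed
next
  case step_ESR thus ?thesis using cN by simp
qed

lemma app_simulation_rev:
  assumes cN: "c \<noteq> Need" and r: "step c x (App (ES a w) (ES b w)) t'"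
  shows "\<exists>u'. step c x (ES (App a b) w) u' \<and> streq c t' u'"
  using r
proof cases
  case step_dB
  hence "step c x (ES (App a b) w) (ES (dB_contr b a) w)" by (auto intro!: step.step_ESL step.step_dB)
  thus ?thesis using dB_contr_app[OF cN, of a b w] step_dB streq_sym by auto
next
  case (step_AppL t0)
  have gl: "eval_left c a b" using step_AppL(3) by (simp add: eval_left_ES)
  from step_AppL(2) show ?thesis
  proof cases
    case step_ls
    hence "head_var c (App a b) = Some 0" using gl by simp
    hence "step c x (ES (App a b) w) (ES (App (subst_head c (lift 0 (Suc 0) w) a) b) w)"
      using step_ls' step_ls gl by fastforce
    moreover have "streq c t' (ES (App (subst_head c (lift 0 (Suc 0) w) a) b) w)"
      using step_ls step_AppL streq_app[OF cN] streq_sym by simp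
    ultimately show ?thesis by blast
  next
    case step_lsv
    hence "head_var c (App a b) = Some 0" using gl by simp
    hence "step c x (ES (App a b) w) (lsv_contr c (App a b) w)" using step_lsv by (auto intro!: step.step_lsv)
    moreover have "streq c t' (lsv_contr c (App a b) w)"
      using lsv_contr_app[OF cN, of w a b] gl step_lsv step_AppL streq_sym by simp
    ultimately show ?thesis by blast
  next
    case (step_ESL a')
    hence "step c x (ES (App a b) w) (ES (App a' b) w)" using gl by (auto intro!: step.step_AppL step.step_ESL)
    thus ?thesis using step_ESL step_AppL streq_app[OF cN] streq_sym by auto
  next
    case step_ESR thus ?thesis using cN by simp
  qed
next
  case (step_AppR t0)
  have gl: "\<not> eval_left c a b" using step_AppR(3) by (simp add: eval_left_ES)
  from step_AppR(2) show ?thesis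
  proof cases
    case step_ls thus ?thesis using gl by simp
  next
    case step_lsv
    hence "head_var c (App a b) = Some 0" using gl by simp
    hence "step c x (ES (App a b) w) (lsv_contr c (App a b) w)" using step_lsv by (auto intro!: step.step_lsv)
    moreover have "streq c t' (lsv_contr c (App a b) w)"
      using lsv_contr_app[OF cN, of w a b] gl step_lsv step_AppR streq_sym by simp
    ultimately show ?thesis by blast
  next
    case (step_ESL b')
    hence "step c x (ES (App a b) w) (ES (App a b') w)" using gl by (auto intro!: step.step_AppR step.step_ESL)
    thus ?thesis using step_ESL step_AppR streq_app[OF cN] streq_sym by auto
  next
    case step_ESR thus ?thesis using cN by simp
  qed
qed

lemma head_var_swap_0: "head_var c (swap 0 a) = Some 0 \<longleftrightarrow> head_var c a = Some 1"
  by (auto simp: head_var_swap swap_idx_def split: if_splits)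

lemma head_var_swap_1: "head_var c (swap 0 a) = Some 1 \<longleftrightarrow> head_var c a = Some 0"
  by (auto simp: head_var_swap swap_idx_def split: if_splits)

lemma head_var_ES_lift_0: "head_var c (ES a (lift 0 1 u)) = Some 0 \<longleftrightarrow> head_var c a = Some 1"
  by (auto simp: head_var_lift lift_idx_def split: option.splits nat.splits if_splits)

lemma com_simulation_inner:
  assumes "step c x (ES a (lift 0 1 u1)) t0"
  shows "\<exists>u'. step c x (ES (ES (swap 0 a) (lift 0 1 w)) u1) u' \<and> streq c (ES t0 w) u'"
  using assms
proof cases
  case step_ls
  have h1: "head_var c (swap 0 a) = Some 1" using step_ls head_var_swap_1 by blast
  hence "head_var c (ES (swap 0 a) (lift 0 1 w)) = Some 0" using head_var_ES_lift_0 by blast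
  hence "step c x (ES (ES (swap 0 a) (lift 0 1 w)) u1) (ES (ES (subst_head c (lift 0 (Suc 0) (lift 0 (Suc 0) u1)) (swap 0 a)) (lift 0 1 w)) u1)"
    using step_ls h1 step_ls'[of c "ES (swap 0 a) (lift 0 1 w)" u1] by auto
  moreover have "streq c (ES t0 w) (ES (ES (subst_head c (lift 0 (Suc 0) (lift 0 (Suc 0) u1)) (swap 0 a)) (lift 0 1 w)) u1)"
    using step_ls streq_com[of c "subst_head c (lift 0 (Suc (Suc 0)) u1) a" u1 w] by (simp add: lift_lift_0 swap_subst_head_lift_2)
  ultimately show ?thesis by blast
next
  case step_lsv
  have h1: "head_var c (swap 0 a) = Some 1" using step_lsv head_var_swap_1 by blast
  hence "head_var c (ES (swap 0 a) (lift 0 1 w)) = Some 0" using head_var_ES_lift_0 by blast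
  moreover have "is_answer u1" using step_lsv by (simp add: lift_eq_rename)
  ultimately have "step c x (ES (ES (swap 0 a) (lift 0 1 w)) u1) (lsv_contr c (ES (swap 0 a) (lift 0 1 w)) u1)"
    using step_lsv by (auto intro!: step.step_lsv)
  moreover have "streq c (ES t0 w) (lsv_contr c (ES (swap 0 a) (lift 0 1 w)) u1)"
    using lsv_contr_com[OF h1 \<open>is_answer u1\<close>, of w] step_lsv streq_sym by simp
  ultimately show ?thesis by blast
next
  case (step_ESL a')
  hence "step c x (ES (ES (swap 0 a) (lift 0 1 w)) u1) (ES (ES (swap 0 a') (lift 0 1 w)) u1)"
    by (auto intro!: step.step_ESL simp: swap_eq_rename step_rename)
  thus ?thesis using step_ESL streq_com by auto
next
  case (step_ESR u0)
  then obtain u1' where u1': "u0 = lift 0 1 u1'" "step c x u1 u1'" using step_lift_inv by blast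
  have "head_var c (ES (swap 0 a) (lift 0 1 w)) = Some 0" using step_ESR head_var_swap_1 head_var_ES_lift_0 by blast
  hence "step c x (ES (ES (swap 0 a) (lift 0 1 w)) u1) (ES (ES (swap 0 a) (lift 0 1 w)) u1')"
    using step_ESR u1' by (auto intro!: step.step_ESR)
  thus ?thesis using step_ESR u1' streq_com by auto
qed

lemma com_simulation:
  assumes r: "step c x (ES (ES a (lift 0 1 u1)) w) t'"
  shows "\<exists>u'. step c x (ES (ES (swap 0 a) (lift 0 1 w)) u1) u' \<and> streq c t' u'"
  using r
proof cases
  case step_ls
  hence h1: "head_var c a = Some 1" using head_var_ES_lift_0 by blast
  have "step c x (ES (ES (swap 0 a) (lift 0 1 w)) u1) (ES (ES (subst_head c (lift 0 (Suc 0) (lift 0 (Suc 0) w)) (swap 0 a)) (lift 0 1 w)) u1)"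
    using step.step_ESL[OF step_ls'[of c "swap 0 a" "lift 0 1 w"]] step_ls h1 head_var_swap_0 by auto
  moreover have "streq c t' (ES (ES (subst_head c (lift 0 (Suc 0) (lift 0 (Suc 0) w)) (swap 0 a)) (lift 0 1 w)) u1)"
    using step_ls h1 streq_com[of c "subst_head c (lift 0 (Suc (Suc 0)) w) a" u1 w] by (simp add: lift_lift_0 swap_subst_head_lift_2)
  ultimately show ?thesis by blast
next
  case step_lsv
  hence h1: "head_var c a = Some 1" using head_var_ES_lift_0 by blast
  have "step c x (ES (ES (swap 0 a) (lift 0 1 w)) u1) (ES (lsv_contr c (swap 0 a) (lift 0 1 w)) u1)"
    using step_lsv h1 head_var_swap_0 by (auto intro!: step.step_ESL step.step_lsv simp: lift_eq_rename)
  thus ?thesis using lsv_contr_com[OF h1, of w u1] step_lsv by auto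
next
  case (step_ESL t0) thus ?thesis using com_simulation_inner by simp
next
  case (step_ESR w')
  hence h1: "head_var c a = Some 1" using head_var_ES_lift_0 by blast
  hence "step c x (ES (ES (swap 0 a) (lift 0 1 w)) u1) (ES (ES (swap 0 a) (lift 0 1 w')) u1)"
    using step_ESR head_var_swap_0 step_lift_0 by (auto intro!: step.step_ESL step.step_ESR)
  thus ?thesis using step_ESR streq_com by auto
qed

lemma com_simulation_rev:
  assumes r: "step c x (ES (ES (swap 0 a) (lift 0 1 w)) u1) t'"
  shows "\<exists>u'. step c x (ES (ES a (lift 0 1 u1)) w) u' \<and> streq c t' u'"
  using com_simulation[OF r] by simp

lemma head_var_lift1_ne_1: "head_var c (lift 1 1 a) \<noteq> Some 1"
  by (auto simp: head_var_lift lift_idx_def split: if_splits)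

lemma head_var_lift1_0: "head_var c (lift 1 1 a) = Some 0 \<longleftrightarrow> head_var c a = Some 0"
  by (auto simp: head_var_lift lift_idx_def split: if_splits)

lemma sub_simulation:
  assumes r: "step c x (ES (ES (lift 1 1 a) u1) w) t'"
  shows "\<exists>u'. step c x (ES a (ES u1 w)) u' \<and> streq c t' u'"
  using r
proof cases
  case step_ls thus ?thesis using head_var_lift1_ne_1 by (auto split: option.splits nat.splits)
next
  case step_lsv
  hence cN: "c = Need" and h: "head_var c a = Some 0" "head_var c u1 = Some 0"
    using head_var_lift1_ne_1[of c a] head_var_lift1_0[of c a] by (auto split: option.splits nat.splits if_splits)
  have "step c x (ES a (ES u1 w)) (ES a (lsv_contr c u1 w))" using step_lsv cN h by (auto intro!: step.step_ESR step.step_lsv)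
  thus ?thesis using lsv_contr_sub[of a w u1] step_lsv cN h by auto
next
  case (step_ESL t0)
  from step_ESL(2) show ?thesis
  proof cases
    case step_ls
    hence h: "head_var c a = Some 0" using head_var_lift1_0 by blast
    hence "step c x (ES a (ES u1 w)) (ES (subst_head c (lift 0 (Suc 0) (ES u1 w)) a) (ES u1 w))" using step_ls step_ls' by blast
    thus ?thesis using subst_head_sub[of a u1 w] step_ls step_ESL h by auto
  next
    case step_lsv
    hence h: "head_var c a = Some 0" using head_var_lift1_0 by blast
    have "step c E (ES a (ES u1 w)) (lsv_contr c a (ES u1 w))" by (rule step.step_lsv) (use step_lsv h in auto)
    thus ?thesis using step_lsv step_ESL by auto
  next
    case (step_ESL a0)
    then obtain a' where "a0 = lift 1 1 a'" "step c x a a'" using step_lift_inv by blast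
    thus ?thesis using step_ESL \<open>t' = ES t0 w\<close> streq_sub by (auto intro: step.step_ESL)
  next
    case (step_ESR u1')
    hence "head_var c a = Some 0" using head_var_lift1_0 by blast
    hence "step c x (ES a (ES u1 w)) (ES a (ES u1' w))" using step_ESR by (auto intro!: step.step_ESR step.step_ESL)
    thus ?thesis using step_ESR step_ESL streq_sub by auto
  qed
next
  case (step_ESR w')
  hence h: "head_var c a = Some 0" "head_var c u1 = Some 0"
    using head_var_lift1_ne_1[of c a] head_var_lift1_0[of c a] by (auto split: option.splits nat.splits if_splits)
  hence "step c x (ES a (ES u1 w)) (ES a (ES u1 w'))" using step_ESR by (auto intro!: step.step_ESR)
  thus ?thesis using step_ESR streq_sub by auto
qed

lemma sub_simulation_rev:
  assumes r: "step c x (ES a (ES u1 w)) t'"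
  shows "\<exists>u'. step c x (ES (ES (lift 1 1 a) u1) w) u' \<and> streq c t' u'"
  using r
proof cases
  case step_ls
  have "step c x (ES (ES (lift 1 1 a) u1) w) (ES (ES (subst_head c (lift 0 (Suc 0) u1) (lift 1 1 a)) u1) w)"
    using step.step_ESL[OF step_ls'[of c "lift 1 1 a" u1]] step_ls head_var_lift1_0 by auto
  thus ?thesis using subst_head_sub[of a u1 w] step_ls streq_sym by auto
next
  case step_lsv
  have "step c x (ES (ES (lift 1 1 a) u1) w) (ES (lsv_contr c (lift 1 1 a) u1) w)"
    using step_lsv head_var_lift1_0 by (auto intro!: step.step_ESL step.step_lsv)
  thus ?thesis using step_lsv by auto
next
  case (step_ESL a')
  hence "step c x (ES (ES (lift 1 1 a) u1) w) (ES (ES (lift 1 1 a') u1) w)"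
    by (auto intro!: step.step_ESL simp: lift_eq_rename step_rename)
  thus ?thesis using step_ESL streq_sub streq_sym by blast
next
  case (step_ESR t1)
  have cN: "c = Need" and h: "head_var c a = Some 0" using step_ESR by auto
  have h11: "head_var c (lift (Suc 0) (Suc 0) a) = Some 0" using h head_var_lift1_0 by simp
  from step_ESR(2) show ?thesis
  proof cases
    case step_ls thus ?thesis using cN by simp
  next
    case step_lsv
    have "head_var c (ES (lift 1 1 a) u1) = Some 0" using step_lsv cN h11 by simp
    hence "step c x (ES (ES (lift 1 1 a) u1) w) (lsv_contr c (ES (lift 1 1 a) u1) w)" using step_lsv by (auto intro!: step.step_lsv)
    thus ?thesis using lsv_contr_sub[of a w u1] step_lsv step_ESR cN h streq_sym by auto
  next
    case (step_ESL u1')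
    hence "step c x (ES (ES (lift 1 1 a) u1) w) (ES (ES (lift 1 1 a) u1') w)"
      using cN h11 by (auto intro!: step.step_ESL step.step_ESR)
    thus ?thesis using step_ESL step_ESR streq_sub streq_sym by auto
  next
    case (step_ESR w')
    have "head_var c (ES (lift 1 1 a) u1) = Some 0" using step_ESR cN h11 by simp
    hence "step c x (ES (ES (lift 1 1 a) u1) w) (ES (ES (lift 1 1 a) u1) w')" using step_ESR by (auto intro!: step.step_ESR)
    thus ?thesis using step_ESR \<open>t' = ES a t1\<close> streq_sub streq_sym by auto
  qed
qed

lemma appl_simulation:
  assumes cN: "c = Need" and r: "step c x (ES (App a (lift 0 1 b)) w) t'"
  shows "\<exists>u'. step c x (App (ES a w) b) u' \<and> streq c t' u'"
  using r
proof cases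
  case step_ls thus ?thesis using cN by simp
next
  case step_lsv
  hence h: "head_var c a = Some 0" using cN by simp
  have "step c x (App (ES a w) b) (App (lsv_contr c a w) b)" using step_lsv h cN by (auto intro!: step.step_AppL step.step_lsv)
  thus ?thesis using lsv_contr_appl[of a w b] step_lsv h cN by auto
next
  case (step_ESL t0)
  from step_ESL(2) show ?thesis
  proof cases
    case step_dB
    have "step c M (App (ES a w) b) (dB_contr b (ES a w))" by (rule step.step_dB) (use step_dB cN in auto)
    thus ?thesis using step_ESL step_dB by auto
  next
    case (step_AppL a')
    hence "step c x (App (ES a w) b) (App (ES a' w) b)" using cN by (auto intro!: step.step_AppL step.step_ESL)
    thus ?thesis using step_ESL step_AppL streq_appl by auto
  next
    case step_AppR thus ?thesis using cN by simp
  qed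
next
  case (step_ESR w')
  hence "head_var c a = Some 0" using cN by simp
  hence "step c x (App (ES a w) b) (App (ES a w') b)" using step_ESR cN by (auto intro!: step.step_AppL step.step_ESR)
  thus ?thesis using step_ESR streq_appl by auto
qed

lemma appl_simulation_rev:
  assumes cN: "c = Need" and r: "step c x (App (ES a w) b) t'"
  shows "\<exists>u'. step c x (ES (App a (lift 0 1 b)) w) u' \<and> streq c t' u'"
  using r
proof cases
  case step_dB
  have "step c M (App a (lift 0 1 b)) (dB_contr (lift 0 1 b) a)" by (rule step.step_dB) (use step_dB cN in auto)
  hence "step c x (ES (App a (lift 0 1 b)) w) (ES (dB_contr (lift 0 1 b) a) w)" using step_dB by (auto intro: step.step_ESL)
  thus ?thesis using step_dB by auto
next
  case (step_AppL t0)
  from step_AppL(2) show ?thesis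
  proof cases
    case step_ls thus ?thesis using cN by simp
  next
    case step_lsv
    have "head_var c (App a (lift 0 1 b)) = Some 0" using step_lsv cN by simp
    hence "step c x (ES (App a (lift 0 1 b)) w) (lsv_contr c (App a (lift 0 1 b)) w)" using step_lsv by (auto intro!: step.step_lsv)
    thus ?thesis using lsv_contr_appl[of a w b] step_lsv step_AppL cN streq_sym by auto
  next
    case (step_ESL a')
    hence "step c x (ES (App a (lift 0 1 b)) w) (ES (App a' (lift 0 1 b)) w)" using cN by (auto intro!: step.step_ESL step.step_AppL)
    thus ?thesis using step_ESL step_AppL streq_appl streq_sym by blast
  next
    case (step_ESR w')
    have "head_var c (App a (lift 0 1 b)) = Some 0" using step_ESR cN by simp
    hence "step c x (ES (App a (lift 0 1 b)) w) (ES (App a (lift 0 1 b)) w')" using step_ESR by (auto intro!: step.step_ESR)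
    thus ?thesis using step_ESR step_AppL streq_appl streq_sym by auto
  qed
next
  case step_AppR thus ?thesis using cN by simp
qed

lemma axioms_simulates:
  assumes "axioms c t u"
  shows "simulates c x t u"
  using assms
proof (cases rule: axioms_cases)
  case gc thus ?thesis using gc_simulation by (auto intro: simulatesI)
next
  case dup thus ?thesis using dup_simulation by (auto intro: simulatesI)
next
  case app thus ?thesis using app_simulation by (auto intro: simulatesI)
next
  case appl thus ?thesis using appl_simulation by (auto intro: simulatesI)
next
  case com thus ?thesis using com_simulation by (auto intro: simulatesI)
next
  case sub thus ?thesis using sub_simulation by (auto intro: simulatesI)
qed

lemma axioms_simulates_rev:
  assumes "axioms c u t"
  shows "simulates c x t u"
  using assms
proof (cases rule: axioms_cases)
  case gc thus ?thesis using gc_simulation_rev by (auto intro: simulatesI)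
next
  case dup thus ?thesis using dup_simulation_rev by (auto intro: simulatesI)
next
  case app thus ?thesis using app_simulation_rev by (auto intro: simulatesI)
next
  case appl thus ?thesis using appl_simulation_rev by (auto intro: simulatesI)
next
  case com thus ?thesis using com_simulation_rev by (auto intro: simulatesI)
next
  case sub thus ?thesis using sub_simulation_rev by (auto intro: simulatesI)
qed

theorem mainTheorem2:
  fixes c :: calculus and x :: kind and t u t' :: trm
  assumes "streq c t u" and "red c x t t'"
  shows "\<exists>u'. red c x u u' \<and> streq c t' u'"
proof -
  have "simulates c x t u"
    using streq_simulates[OF sstep_simulates[OF axioms_simulates axioms_simulates_rev] assms(1)] .
  thus ?thesis using assms(2) simulatesD by (simp add: red_eq_step)
qed

end
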